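(* Let $N\ge2$, $a\in\mathbb{R}$, $\alpha\in(0,1]$, and let $P$ be a symmetric, doubly stochastic $N\times N$ matrix with nonnegative entries and eigenvalues $-1<\lambda_N(P)\le\dots\le\lambda_2(P)<\lambda_1(P)=1$; let $Q=a(P-\alpha I_N)$ and suppose its spectral radius satisfies $\rho(Q)<1$. Consider the state $x_{t+1}=ax_t+r_t$, observations $y_{i,t}=x_t+w_{i,t}$, and either of the estimators $$\hat{x}_{i,t+1}=a\Big(\sum_{j} p_{ij}\hat{x}_{j,t}+\alpha(y_{i,t}-\hat{x}_{i,t})\Big)\quad\text{or}\quad \tilde{x}_{i,t+1}=a\Big(\sum_{j} p_{ij}\tilde{x}_{j,t}+\alpha\Big(\sum_{j} p_{ij}y_{j,t}-\tilde{x}_{i,t}\Big)\Big),$$ with error vector $\xi_t=(x_{i,t}-x_t)_{i=1}^N$ (for the chosen estimator), which satisfies $\xi_{t+1}=Q\xi_t+s_t$ where $s_t=(\alpha a)[w_{1,t},\dots,w_{N,t}]^{\mathsf T}-r_t\mathbf{1}_N$ for the first estimator and $s_t=(\alpha a)P[w_{1,t},\dots,w_{N,t}]^{\mathsf T}-r_t\mathbf{1}_N$ for the second. Assume the $s_t$ are independent over $t$, zero mean, with common covariance $S=\mathbb{E}[s_ts_t^{\mathsf T}]$ (innovations with variance $\sigma_r^2$, observation noises with variance $\sigma_w^2$ independent across agents and uncorrelated with innovations), and that $\max_{t\le T}\|s_t\|\le s$ for some $s>0$. Let $\Sigma=\lim_{t\to\infty}\mathbb{E}[\xi_t\xi_t^{\mathsf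 T}]$ and define the regret $$R_T=\frac1N\mathrm{Tr}\Big(\frac1T\sum_{t=1}^T\xi_t\xi_t^{\mathsf T}-\Sigma\Big).$$ Then for every $\delta\in(0,1)$, with probability at least $1-\delta$, $$R_T\le\frac1T\frac{\|\xi_0\|^2}{1-\rho^2(Q)}+\frac1T\frac{2s\|\xi_0\|}{(1-\rho(Q))^2}+\frac1T\frac{s^2}{(1-\rho^2(Q))^2}+\frac{1}{\sqrt T}\frac{8s^2\sqrt{2\log\frac N\delta}}{(1-\rho(Q))^2}.$$
   Context: $\|\cdot\|$ denotes the Euclidean norm for vectors; $\rho(Q)$ is the spectral radius of $Q$ (equal to its largest singular value since $Q$ is symmetric); $\xi_0$ is the initial error vector. *)

theory Defs
  imports "HOL-Probability.Probability"
begin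

definition real_eigenvalue :: "real^'n^'n \<Rightarrow> real \<Rightarrow> bool" where
  "real_eigenvalue A c \<longleftrightarrow> (\<exists>v. v \<noteq> 0 \<and> A *v v = c *\<^sub>R v)"

definition complex_eigenvalue :: "real^'n^'n \<Rightarrow> complex \<Rightarrow> bool" where
  "complex_eigenvalue A c \<longleftrightarrow>
     (\<exists>v::complex^'n. v \<noteq> 0 \<and> (\<chi> i j. complex_of_real (A$i$j)) *v v = c *s v)"

definition spectral_radius :: "real^'n^'n \<Rightarrow> real" where
  "spectral_radius A = Sup {cmod c | c. complex_eigenvalue A c}"

definition doubly_stochastic :: "real^'n^'n \<Rightarrow> bool" where
  "doubly_stochastic P \<longleftrightarrow> (\<forall>i j. P$i$j \<ge> 0) \<and>
     (\<forall>i. (\<Sum>j\<in>UNIV. P$i$j) = 1) \<and> (\<forall>j. (\<Sum>i\<in>UNIV. P$i$j) = 1)"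

definition outer :: "real^'n \<Rightarrow> real^'n^'n" where
  "outer v = (\<chi> i j. v$i * v$j)"

definition mtrace :: "real^'n^'n \<Rightarrow> real" where
  "mtrace A = (\<Sum>i\<in>UNIV. A$i$i)"

definition second_moment :: "'a measure \<Rightarrow> ('a \<Rightarrow> real^'n) \<Rightarrow> real^'n^'n" where
  "second_moment M X = (\<chi> i j. integral\<^sup>L M (\<lambda>\<omega>. X \<omega> $ i * X \<omega> $ j))"

end

theory Submission
  imports Defs
begin

text \<open>
  The estimation error satisfies \<open>\<xi>\<^sub>t\<^sub>+\<^sub>1 = Q \<xi>\<^sub>t + s\<^sub>t\<close>, hence
  \<open>\<xi>\<^sub>t = Q\<^sup>t \<xi>\<^sub>0 + \<Sum>\<^sub>k\<^sub><\<^sub>t Q\<^bsup>t-1-k\<^esup> s\<^sub>k\<close>. As \<open>Q\<close> is symmetric,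
  \<open>\<parallel>Q v\<parallel> \<le> \<rho>(Q) \<parallel>v\<parallel>\<close>, so the transient part contributes at most
  \<open>\<parallel>\<xi>\<^sub>0\<parallel>\<^sup>2/(1-\<rho>\<^sup>2) + 2 s \<parallel>\<xi>\<^sub>0\<parallel>/(1-\<rho>)\<^sup>2\<close> to \<open>\<Sum>\<^sub>t \<parallel>\<xi>\<^sub>t\<parallel>\<^sup>2\<close>.
  The noise terms are independent and centred, hence orthogonal, so the mean energy of the noise
  response increases in \<open>t\<close> towards \<open>Tr \<Sigma>\<close>; its empirical time average therefore has
  expectation at most \<open>Tr \<Sigma>\<close>. As a function of \<open>s\<^sub>0, \<dots>, s\<^sub>T\<^sub>-\<^sub>1\<close> (clipped at \<open>s\<close>, which
  changes nothing almost surely) this average is bounded and changes by at most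
  \<open>4 s\<^sup>2/((1-\<rho>)\<^sup>2 T)\<close> in each coordinate, and McDiarmid's inequality yields the
  \<open>\<surd>(log(N/\<delta>)/T)\<close> deviation term.
\<close>

section \<open>Symmetric matrices and the spectral radius\<close>

lemma complex_eigenvalue_cmod_le:
  fixes A :: "real^'n^'n"
  assumes "complex_eigenvalue A c"
  shows "cmod c \<le> (\<Sum>i\<in>UNIV. \<Sum>j\<in>UNIV. \<bar>A$i$j\<bar>)"
proof -
  obtain v :: "complex^'n" where v: "v \<noteq> 0" "(\<chi> i j. complex_of_real (A$i$j)) *v v = c *s v"
    using assms unfolding complex_eigenvalue_def by blast
  have "Max (range (\<lambda>j. cmod (v$j))) \<in> range (\<lambda>j. cmod (v$j))" by (rule Max_in) auto
  then obtain i where i0: "cmod (v$i) = Max (range (\<lambda>j. cmod (v$j)))" by (metis rangeE)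
  have i: "cmod (v$j) \<le> cmod (v$i)" for j unfolding i0 by (rule Max_ge) auto
  have vi: "cmod (v$i) > 0"
  proof (rule ccontr)
    assume "\<not> cmod (v$i) > 0"
    then have "v = 0" using i by (metis norm_le_zero_iff not_less order_trans vec_eq_iff zero_index)
    with v show False by simp
  qed
  have "c * v$i = (\<Sum>j\<in>UNIV. complex_of_real (A$i$j) * v$j)"
    using arg_cong[OF v(2), of "\<lambda>w. w$i"] by (simp add: matrix_vector_mult_def)
  then have "cmod c * cmod (v$i) = cmod (\<Sum>j\<in>UNIV. complex_of_real (A$i$j) * v$j)"
    by (metis norm_mult)
  also have "\<dots> \<le> (\<Sum>j\<in>UNIV. \<bar>A$i$j\<bar> * cmod (v$i))"
    by (rule order.trans[OF norm_sum]) (intro sum_mono, simp add: norm_mult mult_left_mono i)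
  also have "\<dots> = (\<Sum>j\<in>UNIV. \<bar>A$i$j\<bar>) * cmod (v$i)" by (simp add: sum_distrib_right)
  finally have "cmod c \<le> (\<Sum>j\<in>UNIV. \<bar>A$i$j\<bar>)" using vi by simp
  also have "\<dots> \<le> (\<Sum>i\<in>UNIV. \<Sum>j\<in>UNIV. \<bar>A$i$j\<bar>)"
    by (rule member_le_sum[where f="\<lambda>i. \<Sum>j\<in>UNIV. \<bar>A$i$j\<bar>"]) (auto intro: sum_nonneg)
  finally show ?thesis .
qed

lemma cmod_le_spectral_radius:
  assumes "complex_eigenvalue A c"
  shows "cmod c \<le> spectral_radius A"
  unfolding spectral_radius_def
  by (rule cSup_upper) (use assms complex_eigenvalue_cmod_le in \<open>auto simp: bdd_above_def\<close>)

lemma complex_eigenvalue_of_real: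
  assumes "A *v u = c *\<^sub>R u" "u \<noteq> 0"
  shows "complex_eigenvalue A (complex_of_real c)"
  unfolding complex_eigenvalue_def
proof (intro exI conjI)
  let ?v = "\<chi> i. complex_of_real (u$i)"
  show "?v \<noteq> 0" using assms(2) by (auto simp: vec_eq_iff)
  have "(\<Sum>j\<in>UNIV. A$i$j * u$j) = c * u$i" for i
    using assms(1) by (auto simp: vec_eq_iff matrix_vector_mult_def)
  then show "(\<chi> i j. complex_of_real (A$i$j)) *v ?v = complex_of_real c *s ?v"
    by (auto simp: vec_eq_iff matrix_vector_mult_def simp flip: of_real_mult of_real_sum)
qed

lemma nonpos_if_linear_le_quadratic:
  fixes q C :: real
  assumes "\<And>t. t > 0 \<Longrightarrow> 2 * t * q \<le> t\<^sup>2 * C"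
  shows "q \<le> 0"
proof (rule ccontr)
  assume q: "\<not> q \<le> 0"
  show False
  proof (cases "C \<le> 0")
    case True
    then show False using assms[of 1] q by simp
  next
    case False
    have "2 * (q / C) * q \<le> (q / C)\<^sup>2 * C" using assms[of "q / C"] q False by simp
    then have "2 * q * q \<le> q * q" using False by (simp add: power2_eq_square field_simps)
    then show False using q by (simp add: mult_le_cancel_right)
  qed
qed

lemma power2_norm_add_scaleR:
  "(norm (x + t *\<^sub>R y))\<^sup>2 = (norm x)\<^sup>2 + 2 * t * inner x y + t\<^sup>2 * (norm (y::'a::real_inner))\<^sup>2"
  unfolding power2_norm_eq_inner
  by (simp add: inner_add_left inner_add_right inner_commute power2_eq_square algebra_simps)

lemma symmetric_matrix_inner_commute:
  "transpose A = A \<Longrightarrow> inner (A *v x) y = inner x (A *v (y::real^'n))"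
  by (metis dot_lmul_matrix vector_transpose_matrix)

text \<open>First-order optimality of the maximiser \<open>v0\<close> in the direction
  \<open>w = A\<^sup>2 v0 - \<parallel>A v0\<parallel>\<^sup>2 v0\<close> forces \<open>w = 0\<close>.\<close>
lemma symmetric_norm_maximizer_eigenvector:
  fixes A :: "real^'n^'n"
  assumes sym: "transpose A = A" and nv0: "norm v0 = 1"
    and max: "\<And>v. norm (A *v v) \<le> norm (A *v v0) * norm v"
  shows "A *v (A *v v0) = (norm (A *v v0))\<^sup>2 *\<^sub>R v0"
proof -
  define m where "m = norm (A *v v0)"
  define w where "w = A *v (A *v v0) - m\<^sup>2 *\<^sub>R v0"
  have "2 * t * inner w w \<le> t\<^sup>2 * (m\<^sup>2 * inner w w)" if "t > 0" for t
  proof -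
    have "m\<^sup>2 + 2 * t * inner (A *v v0) (A *v w) + t\<^sup>2 * (norm (A *v w))\<^sup>2
        = (norm (A *v (v0 + t *\<^sub>R w)))\<^sup>2"
      by (simp add: m_def matrix_vector_right_distrib matrix_vector_mult_scaleR power2_norm_add_scaleR)
    also have "\<dots> \<le> (m * norm (v0 + t *\<^sub>R w))\<^sup>2"
      using max[of "v0 + t *\<^sub>R w"] by (intro power_mono) (auto simp: m_def)
    also have "\<dots> = m\<^sup>2 * (1 + 2 * t * inner v0 w + t\<^sup>2 * inner w w)"
      using nv0 by (simp add: power_mult_distrib power2_norm_add_scaleR flip: power2_norm_eq_inner)
    finally have "m\<^sup>2 + 2 * t * inner (A *v v0) (A *v w) + t\<^sup>2 * (norm (A *v w))\<^sup>2
        \<le> m\<^sup>2 * (1 + 2 * t * inner v0 w + t\<^sup>2 * inner w w)" .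
    moreover have "inner (A *v v0) (A *v w) = inner (A *v (A *v v0)) w"
      by (rule symmetric_matrix_inner_commute[OF sym, symmetric])
    moreover have "inner (A *v (A *v v0)) w = inner w w + m\<^sup>2 * inner v0 w"
      by (simp add: w_def inner_diff_left inner_commute)
    ultimately have "2 * t * inner w w \<le> t\<^sup>2 * (m\<^sup>2 * inner w w) - t\<^sup>2 * (norm (A *v w))\<^sup>2"
      by (simp add: algebra_simps)
    also have "\<dots> \<le> t\<^sup>2 * (m\<^sup>2 * inner w w)" by simp
    finally show ?thesis .
  qed
  then have "inner w w \<le> 0" by (rule nonpos_if_linear_le_quadratic)
  then have "w = 0" by (metis inner_eq_zero_iff inner_ge_zero order_antisym)
  then show ?thesis by (simp add: w_def m_def)
qed

lemma symmetric_matrix_norm_le_spectral_radius: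
  fixes A :: "real^'n^'n"
  assumes sym: "transpose A = A"
  shows "norm (A *v v) \<le> spectral_radius A * norm v" "0 \<le> spectral_radius A"
proof -
  have "sphere (0::real^'n) 1 \<noteq> {}"
    using vector_choose_size[of 1] by (auto simp: sphere_def)
  moreover have "continuous_on (sphere 0 1) (\<lambda>v. norm (A *v v))"
    by (intro continuous_on_norm linear_continuous_on matrix_vector_mul_bounded_linear)
  ultimately obtain v0 where v0: "norm v0 = 1"
    and sup: "\<And>u. norm u = 1 \<Longrightarrow> norm (A *v u) \<le> norm (A *v v0)"
    using continuous_attains_sup[OF compact_sphere] by (metis mem_sphere_0)
  define m where "m = norm (A *v v0)"
  have max: "norm (A *v u) \<le> m * norm u" for u
  proof (cases "u = 0")
    case False
    then have "norm (A *v ((1 / norm u) *\<^sub>R u)) \<le> m" by (intro sup[folded m_def]) simp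
    then show ?thesis using False
      by (simp add: matrix_vector_mult_scaleR field_simps)
  qed simp
  have AA: "A *v (A *v v0) = m\<^sup>2 *\<^sub>R v0"
    unfolding m_def by (rule symmetric_norm_maximizer_eigenvector[OF sym v0 max[unfolded m_def]])
  have "complex_eigenvalue A (complex_of_real m) \<or> complex_eigenvalue A (complex_of_real (- m))"
  proof (cases "A *v v0 + m *\<^sub>R v0 = 0")
    case True
    then have "A *v v0 = (- m) *\<^sub>R v0" by (simp add: add_eq_0_iff2)
    then have "complex_eigenvalue A (complex_of_real (- m))"
      using v0 by (intro complex_eigenvalue_of_real) auto
    then show ?thesis ..
  next
    case False
    have "A *v (A *v v0 + m *\<^sub>R v0) = m *\<^sub>R (A *v v0 + m *\<^sub>R v0)"
      by (simp add: matrix_vector_right_distrib matrix_vector_mult_scaleR AA algebra_simps power2_eq_square)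
    then show ?thesis using complex_eigenvalue_of_real False by blast
  qed
  then have m: "m \<le> spectral_radius A"
    using cmod_le_spectral_radius by (fastforce simp: m_def)
  show "norm (A *v v) \<le> spectral_radius A * norm v"
    using max[of v] m by (meson mult_right_mono norm_ge_zero order_trans)
  show "0 \<le> spectral_radius A"
    using m by (simp add: m_def order_trans[OF norm_ge_zero])
qed

lemma transpose_diff: "transpose (A - B) = transpose A - transpose (B :: 'a::ab_group_add^'n^'m)"
  by (simp add: transpose_def vec_eq_iff)

section \<open>McDiarmid's inequality\<close>

lemma (in prob_space) nn_integral_exp_centered_le:
  assumes [measurable]: "f \<in> borel_measurable M"
    and range: "\<And>x. x \<in> space M \<Longrightarrow> \<bar>f x - m\<bar> \<le> c" and l: "l > 0"
  shows "(\<integral>\<^sup>+x. ennreal (exp (l * (f x - expectation f))) \<partial>M) \<le> ennreal (exp (l\<^sup>2 * c\<^sup>2 / 2))"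
proof -
  interpret interval_bounded_random_variable M f "m - c" "m + c"
  proof
    show "AE x in M. f x \<in> {m - c..m + c}"
      using range by (intro AE_I2) (smt (verit) atLeastAtMost_iff)
  qed simp
  have "(m + c - (m - c))\<^sup>2 = 4 * c\<^sup>2" by (simp add: power2_eq_square algebra_simps)
  then show ?thesis using Hoeffdings_lemma_nn_integral[OF l] by (simp add: mult.commute)
qed

lemma section_integral_bounded_differences:
  fixes \<mu> :: "nat \<Rightarrow> 'a measure" and f :: "(nat \<Rightarrow> 'a) \<Rightarrow> real"
  assumes Pmu: "\<And>i. prob_space (\<mu> i)"
    and fm: "f \<in> borel_measurable (PiM {..<Suc n} \<mu>)"
    and fB: "\<And>x. x \<in> space (PiM {..<Suc n} \<mu>) \<Longrightarrow> \<bar>f x\<bar> \<le> B"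
    and fc: "\<And>x k y. x \<in> space (PiM {..<Suc n} \<mu>) \<Longrightarrow> k < Suc n \<Longrightarrow> y \<in> space (\<mu> k)
               \<Longrightarrow> \<bar>f x - f (x(k:=y))\<bar> \<le> c"
  defines "g \<equiv> \<lambda>x. \<integral>y. f (x(n:=y)) \<partial>\<mu> n"
  shows "g \<in> borel_measurable (PiM {..<n} \<mu>)"
    and "\<And>x. x \<in> space (PiM {..<n} \<mu>) \<Longrightarrow> \<bar>g x\<bar> \<le> B"
    and "\<And>x k y. x \<in> space (PiM {..<n} \<mu>) \<Longrightarrow> k < n \<Longrightarrow> y \<in> space (\<mu> k)
           \<Longrightarrow> \<bar>g x - g (x(k:=y))\<bar> \<le> c"
    and "(\<integral>x. f x \<partial>PiM {..<Suc n} \<mu>) = (\<integral>x. g x \<partial>PiM {..<n} \<mu>)"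
proof -
  interpret product_prob_space \<mu> UNIV
    using Pmu by (simp add: product_prob_space_def product_prob_space_axioms_def
        product_sigma_finite_def prob_space_imp_sigma_finite)
  have ins: "{..<Suc n} = insert n {..<n}" by auto
  have upd: "x(n:=y) \<in> space (PiM {..<Suc n} \<mu>)" if "x \<in> space (PiM {..<n} \<mu>)" "y \<in> space (\<mu> n)" for x y
    using that by (auto simp: space_PiM PiE_def extensional_def less_Suc_eq)
  have hm: "(\<lambda>y. f (x(n:=y))) \<in> borel_measurable (\<mu> n)" if "x \<in> space (PiM {..<n} \<mu>)" for x
    using measurable_comp[OF measurable_component_update fm[unfolded ins], OF that]
    by (simp add: comp_def fun_upd_def)
  have hint: "integrable (\<mu> n) (\<lambda>y. f (x(n:=y)))" if "x \<in> space (PiM {..<n} \<mu>)" for x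
    by (intro M.integrable_const_bound[where B=B] AE_I2) (use fB hm upd that in auto)
  show "g \<in> borel_measurable (PiM {..<n} \<mu>)"
    unfolding g_def
  proof (rule sigma_finite_measure.borel_measurable_lebesgue_integral[OF prob_space_imp_sigma_finite[OF Pmu]])
    show "(\<lambda>(x, y). f (x(n := y))) \<in> borel_measurable (PiM {..<n} \<mu> \<Otimes>\<^sub>M \<mu> n)"
      using measurable_comp[OF measurable_add_dim fm[unfolded ins]] by (simp add: comp_def case_prod_beta)
  qed
  show "\<bar>g x\<bar> \<le> B" if x: "x \<in> space (PiM {..<n} \<mu>)" for x
  proof -
    have "\<bar>g x\<bar> \<le> (\<integral>y. \<bar>f (x(n:=y))\<bar> \<partial>\<mu> n)" unfolding g_def by (rule integral_abs_bound)
    also have "\<dots> \<le> (\<integral>y. B \<partial>\<mu> n)"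
      by (intro integral_mono) (use hint[OF x] fB upd x in auto)
    finally show ?thesis by (simp add: M.prob_space)
  qed
  show "\<bar>g x - g (x(k:=y))\<bar> \<le> c"
    if x: "x \<in> space (PiM {..<n} \<mu>)" and k: "k < n" and y: "y \<in> space (\<mu> k)" for x k y
  proof -
    have x': "x(k:=y) \<in> space (PiM {..<n} \<mu>)"
      using x y k by (auto simp: space_PiM PiE_def extensional_def less_Suc_eq)
    have "g x - g (x(k:=y)) = (\<integral>z. f (x(n:=z)) - f ((x(n:=z))(k:=y)) \<partial>\<mu> n)"
      unfolding g_def using k
      by (subst Bochner_Integration.integral_diff) (auto intro!: hint x x' simp: fun_upd_twist)
    also have "\<bar>\<dots>\<bar> \<le> (\<integral>z. c \<partial>\<mu> n)"
    proof (rule order.trans[OF integral_abs_bound], rule integral_mono)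
      show "integrable (\<mu> n) (\<lambda>z. \<bar>f (x(n:=z)) - f ((x(n:=z))(k:=y))\<bar>)"
        using k by (auto intro!: hint x x' simp: fun_upd_twist)
      show "\<bar>f (x(n:=z)) - f ((x(n:=z))(k:=y))\<bar> \<le> c" if "z \<in> space (\<mu> n)" for z
        using fc[OF upd[OF x that] _ y] k by simp
    qed auto
    finally show ?thesis by (simp add: M.prob_space)
  qed
  show "(\<integral>x. f x \<partial>PiM {..<Suc n} \<mu>) = (\<integral>x. g x \<partial>PiM {..<n} \<mu>)"
  proof -
    interpret PS: prob_space "PiM {..<Suc n} \<mu>" by (rule prob_space_PiM) (rule Pmu)
    have "integrable (PiM {..<Suc n} \<mu>) f"
      by (intro PS.integrable_const_bound[where B=B] AE_I2) (use fB fm in auto)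
    then show ?thesis
      unfolding ins g_def by (rule product_integral_insert[rotated 2]) auto
  qed
qed

text \<open>Integrating out the last coordinate is a Hoeffding step for a variable whose range has
  width \<open>2 c\<close>, whence the constant \<open>c\<^sup>2/2\<close> rather than the sharp \<open>c\<^sup>2/8\<close>.\<close>
lemma mcdiarmid_nn_integral_exp_PiM:
  fixes \<mu> :: "nat \<Rightarrow> 'a measure" and f :: "(nat \<Rightarrow> 'a) \<Rightarrow> real"
  assumes Pmu: "\<And>i. prob_space (\<mu> i)"
    and fm: "f \<in> borel_measurable (PiM {..<n} \<mu>)"
    and fB: "\<And>x. x \<in> space (PiM {..<n} \<mu>) \<Longrightarrow> \<bar>f x\<bar> \<le> B"
    and fc: "\<And>x k y. x \<in> space (PiM {..<n} \<mu>) \<Longrightarrow> k < n \<Longrightarrow> y \<in> space (\<mu> k)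
               \<Longrightarrow> \<bar>f x - f (x(k:=y))\<bar> \<le> c"
    and l: "l > 0"
  shows "(\<integral>\<^sup>+x. ennreal (exp (l * (f x - (\<integral>x. f x \<partial>PiM {..<n} \<mu>)))) \<partial>PiM {..<n} \<mu>)
           \<le> ennreal (exp (l\<^sup>2 * real n * c\<^sup>2 / 2))"
  using fm fB fc
proof (induction n arbitrary: f)
  case 0
  then show ?case
    by (simp add: PiM_empty lebesgue_integral_count_space_finite nn_integral_count_space_finite)
next
  case (Suc n)
  interpret product_prob_space \<mu> UNIV
    using Pmu by (simp add: product_prob_space_def product_prob_space_axioms_def
        product_sigma_finite_def prob_space_imp_sigma_finite)
  have ins: "{..<Suc n} = insert n {..<n}" by auto
  have [measurable]: "f \<in> borel_measurable (PiM (insert n {..<n}) \<mu>)"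
    using Suc.prems(1) ins by simp
  define g where "g x = (\<integral>y. f (x(n:=y)) \<partial>\<mu> n)" for x
  note g = section_integral_bounded_differences[OF Pmu Suc.prems, folded g_def]
  have [measurable]: "g \<in> borel_measurable (PiM {..<n} \<mu>)" by (rule g(1))
  define E where "E = (\<integral>x. g x \<partial>PiM {..<n} \<mu>)"
  have EE: "(\<integral>x. f x \<partial>PiM {..<Suc n} \<mu>) = E" unfolding E_def by (rule g(4))
  have step: "(\<integral>\<^sup>+y. ennreal (exp (l * (f (x(n:=y)) - g x))) \<partial>\<mu> n) \<le> ennreal (exp (l\<^sup>2 * c\<^sup>2 / 2))"
    if x: "x \<in> space (PiM {..<n} \<mu>)" for x
  proof -
    obtain y0 where y0: "y0 \<in> space (\<mu> n)" using prob_space.not_empty[OF Pmu] by blast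
    have upd: "x(n:=y) \<in> space (PiM {..<Suc n} \<mu>)" if "y \<in> space (\<mu> n)" for y
      using x that by (auto simp: space_PiM PiE_def extensional_def less_Suc_eq)
    have "\<bar>f (x(n:=y)) - f (x(n:=y0))\<bar> \<le> c" if "y \<in> space (\<mu> n)" for y
      using Suc.prems(3)[OF upd[OF y0] _ that] by (metis abs_minus_commute fun_upd_upd lessI)
    then show ?thesis unfolding g_def using x
      by (intro M.nn_integral_exp_centered_le l) measurable
  qed
  have "(\<integral>\<^sup>+x. ennreal (exp (l * (f x - (\<integral>x. f x \<partial>PiM {..<Suc n} \<mu>)))) \<partial>PiM {..<Suc n} \<mu>)
      = (\<integral>\<^sup>+x. (\<integral>\<^sup>+y. ennreal (exp (l * (g x - E))) * ennreal (exp (l * (f (x(n:=y)) - g x))) \<partial>\<mu> n)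
           \<partial>PiM {..<n} \<mu>)"
    unfolding EE unfolding ins
    by (subst product_nn_integral_insert) (auto simp flip: ennreal_mult' exp_add simp: algebra_simps)
  also have "\<dots> = (\<integral>\<^sup>+x. ennreal (exp (l * (g x - E)))
                      * (\<integral>\<^sup>+y. ennreal (exp (l * (f (x(n:=y)) - g x))) \<partial>\<mu> n) \<partial>PiM {..<n} \<mu>)"
    by (intro nn_integral_cong nn_integral_cmult) measurable
  also have "\<dots> \<le> (\<integral>\<^sup>+x. ennreal (exp (l * (g x - E))) * ennreal (exp (l\<^sup>2 * c\<^sup>2 / 2)) \<partial>PiM {..<n} \<mu>)"
    by (intro nn_integral_mono mult_left_mono step) auto
  also have "\<dots> = (\<integral>\<^sup>+x. ennreal (exp (l * (g x - E))) \<partial>PiM {..<n} \<mu>) * ennreal (exp (l\<^sup>2 * c\<^sup>2 / 2))"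
    by (rule nn_integral_multc) measurable
  also have "\<dots> \<le> ennreal (exp (l\<^sup>2 * real n * c\<^sup>2 / 2)) * ennreal (exp (l\<^sup>2 * c\<^sup>2 / 2))"
    unfolding E_def by (intro mult_right_mono Suc.IH g) auto
  also have "\<dots> = ennreal (exp (l\<^sup>2 * real (Suc n) * c\<^sup>2 / 2))"
    by (simp add: ennreal_mult'[symmetric] exp_add[symmetric] algebra_simps)
  finally show ?case .
qed

theorem (in prob_space) mcdiarmid_inequality:
  fixes X :: "nat \<Rightarrow> 'a \<Rightarrow> 'b::topological_space" and G :: "(nat \<Rightarrow> 'b) \<Rightarrow> real" and n :: nat
  defines "Z \<equiv> \<lambda>\<omega>. restrict (\<lambda>i. X i \<omega>) {..<n}"
  assumes ind: "indep_vars (\<lambda>_. borel) X {..<n}" and n: "n \<ge> 1"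
    and Gm: "G \<in> borel_measurable (PiM {..<n} (\<lambda>_. borel))"
    and GB: "\<And>z. \<bar>G z\<bar> \<le> B"
    and Gc: "\<And>z k y. k < n \<Longrightarrow> \<bar>G z - G (z(k:=y))\<bar> \<le> c"
    and c: "c > 0" and \<epsilon>: "\<epsilon> > 0"
  shows "prob {\<omega> \<in> space M. (\<integral>\<omega>. G (Z \<omega>) \<partial>M) + \<epsilon> \<le> G (Z \<omega>)} \<le> exp (- \<epsilon>\<^sup>2 / (2 * real n * c\<^sup>2))"
proof -
  have rv [measurable]: "i \<in> {..<n} \<Longrightarrow> random_variable borel (X i)" for i
    using ind unfolding indep_vars_def by blast
  have [measurable]: "Z \<in> measurable M (PiM {..<n} (\<lambda>_. borel))"
    unfolding Z_def by (intro measurable_restrict rv) auto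
  have [measurable]: "G \<in> borel_measurable (PiM {..<n} (\<lambda>_. borel))" by (rule Gm)
  define \<mu> where "\<mu> i = (if i < n then distr M borel (X i) else return borel undefined)" for i
  have Pmu: "prob_space (\<mu> i)" for i
    unfolding \<mu>_def using rv by (auto intro!: prob_space_distr prob_space_return)
  have "{..<n} \<noteq> {}" using n by (simp add: lessThan_empty_iff)
  then have "distr M (PiM {..<n} (\<lambda>_. borel)) Z = PiM {..<n} (\<lambda>i. distr M borel (X i))"
    unfolding Z_def by (intro indep_vars_iff_distr_eq_PiM'[THEN iffD1, OF _ rv ind])
  then have PiEq: "PiM {..<n} \<mu> = distr M (PiM {..<n} (\<lambda>_. borel)) Z"
    by (simp, intro PiM_cong) (auto simp: \<mu>_def)
  have "sets (PiM {..<n} \<mu>) = sets (PiM {..<n} (\<lambda>_. borel))"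
    by (intro sets_PiM_cong) (auto simp: \<mu>_def)
  then have Gm': "G \<in> borel_measurable (PiM {..<n} \<mu>)"
    using Gm by (subst measurable_cong_sets) auto
  define EG where "EG = (\<integral>\<omega>. G (Z \<omega>) \<partial>M)"
  define l where "l = \<epsilon> / (real n * c\<^sup>2)"
  have l: "l > 0" using n c \<epsilon> by (simp add: l_def)
  have "(\<integral>\<^sup>+\<omega>. ennreal (exp (l * (G (Z \<omega>) - EG))) \<partial>M)
      = (\<integral>\<^sup>+x. ennreal (exp (l * (G x - (\<integral>x. G x \<partial>PiM {..<n} \<mu>)))) \<partial>PiM {..<n} \<mu>)"
    unfolding PiEq EG_def by (simp add: integral_distr nn_integral_distr)
  also have "\<dots> \<le> ennreal (exp (l\<^sup>2 * real n * c\<^sup>2 / 2))"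
    by (rule mcdiarmid_nn_integral_exp_PiM[OF Pmu Gm' GB]) (auto intro: Gc l)
  finally have mgf: "(\<integral>\<^sup>+\<omega>. ennreal (exp (l * (G (Z \<omega>) - EG))) \<partial>M) \<le> ennreal (exp (l\<^sup>2 * real n * c\<^sup>2 / 2))" .
  have "emeasure M {\<omega> \<in> space M. \<epsilon> \<le> G (Z \<omega>) - EG}
      \<le> ennreal (exp (- l * \<epsilon>)) * (\<integral>\<^sup>+\<omega>. ennreal (exp (l * (G (Z \<omega>) - EG))) * indicator (space M) \<omega> \<partial>M)"
    by (rule Chernoff_ineq_nn_integral_ge[OF l]) auto
  also have "(\<integral>\<^sup>+\<omega>. ennreal (exp (l * (G (Z \<omega>) - EG))) * indicator (space M) \<omega> \<partial>M)
      = (\<integral>\<^sup>+\<omega>. ennreal (exp (l * (G (Z \<omega>) - EG))) \<partial>M)"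
    by (intro nn_integral_cong) auto
  also have "ennreal (exp (- l * \<epsilon>)) * \<dots> \<le> ennreal (exp (- l * \<epsilon>)) * ennreal (exp (l\<^sup>2 * real n * c\<^sup>2 / 2))"
    by (intro mult_left_mono mgf) auto
  also have "\<dots> = ennreal (exp (- \<epsilon>\<^sup>2 / (2 * real n * c\<^sup>2)))"
    using n c by (simp add: l_def ennreal_mult'[symmetric] exp_add[symmetric] power2_eq_square field_simps)
  finally show ?thesis
    by (simp add: EG_def emeasure_eq_measure algebra_simps)
qed

section \<open>Linear recursions driven by a contraction\<close>

lemma sum_lessThan_power_le:
  fixes \<rho> :: real
  assumes "0 \<le> \<rho>" "\<rho> < 1"
  shows "(\<Sum>j<t. \<rho>^j) \<le> 1 / (1 - \<rho>)"
  using assms by (simp add: sum_gp_strict divide_right_mono)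

lemma sum_lessThan_power_diff_le:
  fixes \<rho> :: real
  assumes "0 \<le> \<rho>" "\<rho> < 1"
  shows "(\<Sum>k<t. \<rho>^(t - 1 - k)) \<le> 1 / (1 - \<rho>)"
  using sum.nat_diff_reindex[of "\<lambda>j. \<rho>^j" t] sum_lessThan_power_le[OF assms, of t] by simp

lemma sum_power_after_le:
  fixes \<rho> :: real
  assumes "0 \<le> \<rho>" "\<rho> < 1"
  shows "(\<Sum>t<n. if k < t then \<rho>^(t - 1 - k) else 0) \<le> 1 / (1 - \<rho>)"
proof -
  have "(\<Sum>t<n. if k < t then \<rho>^(t - 1 - k) else 0) = (\<Sum>j<n - Suc k. \<rho>^j)"
    by (induction n) (auto simp: less_Suc_eq Suc_diff_le simp flip: Suc_diff_Suc)
  then show ?thesis using sum_lessThan_power_le[OF assms] by simp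
qed

lemma sum_atLeastAtMost_power_le:
  fixes \<rho> :: real
  assumes "0 \<le> \<rho>" "\<rho> < 1"
  shows "(\<Sum>t\<in>{1..T}. \<rho>^t) \<le> 1 / (1 - \<rho>)"
proof -
  have "(\<Sum>t\<in>{1..T}. \<rho>^t) \<le> (\<Sum>t<Suc T. \<rho>^t)"
    by (rule sum_mono2) (use assms in auto)
  then show ?thesis using sum_lessThan_power_le[OF assms, of "Suc T"] by linarith
qed

definition matpow :: "real^'n^'n \<Rightarrow> nat \<Rightarrow> real^'n^'n" where
  "matpow A m = ((**) A ^^ m) (mat 1)"

lemma matpow_0_mult [simp]: "matpow A 0 *v v = v"
  by (simp add: matpow_def)

lemma matpow_Suc_mult: "matpow A (Suc m) *v v = A *v (matpow A m *v v)"
  by (simp add: matpow_def matrix_vector_mul_assoc)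

definition forced_response :: "real^'n^'n \<Rightarrow> nat \<Rightarrow> (nat \<Rightarrow> real^'n) \<Rightarrow> real^'n" where
  "forced_response A t z = (\<Sum>k<t. matpow A (t - 1 - k) *v z k)"

lemma forced_response_0 [simp]: "forced_response A 0 z = 0"
  by (simp add: forced_response_def)

lemma forced_response_Suc: "forced_response A (Suc t) z = A *v forced_response A t z + z t"
proof -
  have "forced_response A (Suc t) z = (\<Sum>k<t. matpow A (Suc (t - 1 - k)) *v z k) + z t"
    by (simp add: forced_response_def Suc_diff_Suc)
  also have "(\<Sum>k<t. matpow A (Suc (t - 1 - k)) *v z k) = A *v forced_response A t z"
    by (simp add: forced_response_def matpow_Suc_mult linear_sum[OF matrix_vector_mul_linear])
  finally show ?thesis .
qed

lemma forced_response_diff: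
  "forced_response A t z - forced_response A t z' = forced_response A t (\<lambda>k. z k - z' k)"
  by (simp add: forced_response_def sum_subtractf matrix_vector_mult_diff_distrib)

lemma forced_response_cong:
  "(\<And>k. k < t \<Longrightarrow> z k = z' k) \<Longrightarrow> forced_response A t z = forced_response A t z'"
  unfolding forced_response_def by (intro sum.cong) auto

lemma linear_recurrence_solution:
  assumes "\<And>t. v (Suc t) = A *v v t + z t"
  shows "v t = matpow A t *v v 0 + forced_response A t z"
  by (induction t) (simp_all add: assms forced_response_Suc matpow_Suc_mult matrix_vector_right_distrib)

locale matrix_contraction =
  fixes A :: "real^'n^'n" and \<rho> :: real
  assumes norm_mult_le: "norm (A *v v) \<le> \<rho> * norm v"
    and rate_nonneg: "0 \<le> \<rho>" and rate_less_one: "\<rho> < 1"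
begin

lemma norm_matpow_mult_le: "norm (matpow A m *v v) \<le> \<rho>^m * norm v"
proof (induction m)
  case (Suc m)
  have "norm (matpow A (Suc m) *v v) \<le> \<rho> * norm (matpow A m *v v)"
    unfolding matpow_Suc_mult by (rule norm_mult_le)
  also have "\<dots> \<le> \<rho> * (\<rho>^m * norm v)" by (intro mult_left_mono Suc.IH rate_nonneg)
  finally show ?case by simp
qed simp

lemma norm_forced_response_le: "norm (forced_response A t z) \<le> (\<Sum>k<t. \<rho>^(t - 1 - k) * norm (z k))"
  unfolding forced_response_def
  by (rule order.trans[OF norm_sum]) (intro sum_mono norm_matpow_mult_le)

lemma norm_forced_response_bounded:
  assumes "0 \<le> s" and "\<And>k. k < t \<Longrightarrow> norm (z k) \<le> s"
  shows "norm (forced_response A t z) \<le> s / (1 - \<rho>)"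
proof -
  have "norm (forced_response A t z) \<le> (\<Sum>k<t. \<rho>^(t - 1 - k) * s)"
    by (rule order.trans[OF norm_forced_response_le])
      (intro sum_mono mult_left_mono assms, auto simp: rate_nonneg)
  also have "\<dots> = s * (\<Sum>k<t. \<rho>^(t - 1 - k))" by (simp add: sum_distrib_left mult.commute)
  also have "\<dots> \<le> s * (1 / (1 - \<rho>))"
    by (intro mult_left_mono sum_lessThan_power_diff_le rate_nonneg rate_less_one assms)
  finally show ?thesis by simp
qed

lemma sum_norm_sq_response_le:
  assumes s: "0 \<le> s" and z: "\<And>k. k < T \<Longrightarrow> norm (z k) \<le> s"
  shows "(\<Sum>t\<in>{1..T}. (norm (matpow A t *v v + forced_response A t z))\<^sup>2)
           \<le> (norm v)\<^sup>2 / (1 - \<rho>\<^sup>2) + 2 * s * norm v / (1 - \<rho>)\<^sup>2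
             + (\<Sum>t\<in>{1..T}. (norm (forced_response A t z))\<^sup>2)"
proof -
  have r2: "0 \<le> \<rho>\<^sup>2" "\<rho>\<^sup>2 < 1"
    using rate_nonneg rate_less_one by (auto simp: power_less_one_iff abs_square_less_1)
  have each: "(norm (matpow A t *v v + forced_response A t z))\<^sup>2
      \<le> (\<rho>\<^sup>2)^t * (norm v)\<^sup>2 + (2 * s * norm v / (1 - \<rho>)) * \<rho>^t + (norm (forced_response A t z))\<^sup>2"
    if t: "t \<in> {1..T}" for t
  proof -
    let ?c = "matpow A t *v v" and ?e = "forced_response A t z"
    have ne: "norm ?e \<le> s / (1 - \<rho>)"
      by (rule norm_forced_response_bounded[OF s]) (use z t in auto)
    have "(norm (?c + ?e))\<^sup>2 \<le> (norm ?c + norm ?e)\<^sup>2"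
      by (intro power_mono norm_triangle_ineq) auto
    also have "\<dots> = (norm ?c)\<^sup>2 + 2 * norm ?c * norm ?e + (norm ?e)\<^sup>2" by (simp add: power2_sum)
    also have "\<dots> \<le> (\<rho>^t * norm v)\<^sup>2 + 2 * (\<rho>^t * norm v) * (s / (1 - \<rho>)) + (norm ?e)\<^sup>2"
      by (intro add_mono mult_mono power_mono norm_matpow_mult_le ne order_refl mult_left_mono)
        (use rate_nonneg in auto)
    also have "\<dots> = (\<rho>\<^sup>2)^t * (norm v)\<^sup>2 + (2 * s * norm v / (1 - \<rho>)) * \<rho>^t + (norm ?e)\<^sup>2"
      by (simp add: power_mult_distrib power_mult[symmetric] mult.commute[of 2 t])
    finally show ?thesis .
  qed
  have "(\<Sum>t\<in>{1..T}. (norm (matpow A t *v v + forced_response A t z))\<^sup>2)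
      \<le> (\<Sum>t\<in>{1..T}. (\<rho>\<^sup>2)^t * (norm v)\<^sup>2 + (2 * s * norm v / (1 - \<rho>)) * \<rho>^t
          + (norm (forced_response A t z))\<^sup>2)"
    by (rule sum_mono) (rule each)
  also have "\<dots> = (norm v)\<^sup>2 * (\<Sum>t\<in>{1..T}. (\<rho>\<^sup>2)^t) + (2 * s * norm v / (1 - \<rho>)) * (\<Sum>t\<in>{1..T}. \<rho>^t)
        + (\<Sum>t\<in>{1..T}. (norm (forced_response A t z))\<^sup>2)"
    by (simp only: sum.distrib sum_distrib_left) (simp add: mult_ac)
  also have "\<dots> \<le> (norm v)\<^sup>2 * (1 / (1 - \<rho>\<^sup>2)) + (2 * s * norm v / (1 - \<rho>)) * (1 / (1 - \<rho>))
        + (\<Sum>t\<in>{1..T}. (norm (forced_response A t z))\<^sup>2)"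
    using s rate_nonneg rate_less_one r2
    by (intro add_mono mult_left_mono sum_atLeastAtMost_power_le order_refl) auto
  finally show ?thesis by (simp add: power2_eq_square)
qed

end

definition clip :: "real \<Rightarrow> real^'n \<Rightarrow> real^'n" where
  "clip s v = (if norm v \<le> s then v else 0)"

lemma norm_clip_le: "0 \<le> s \<Longrightarrow> norm (clip s v) \<le> s"
  by (simp add: clip_def)

lemma clip_eq_self: "norm v \<le> s \<Longrightarrow> clip s v = v"
  by (simp add: clip_def)

lemma clip_measurable [measurable]: "clip s \<in> borel_measurable borel"
  unfolding clip_def by measurable

text \<open>Clipping the inputs at the almost-sure bound \<open>s\<close> changes nothing almost surely, but
  makes the empirical energy a bounded function with bounded differences everywhere, as
  McDiarmid's inequality requires.\<close>
definition clipped_energy :: "real^'n^'n \<Rightarrow> real \<Rightarrow> nat \<Rightarrow> (nat \<Rightarrow> real^'n) \<Rightarrow> real" where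
  "clipped_energy A s T z = (1 / real T) * (\<Sum>t\<in>{1..T}. (norm (forced_response A t (\<lambda>k. clip s (z k))))\<^sup>2)"

lemma clipped_energy_restrict:
  assumes "\<And>k. k < T \<Longrightarrow> norm (z k) \<le> s"
  shows "clipped_energy A s T (restrict z {..<T})
           = (1 / real T) * (\<Sum>t\<in>{1..T}. (norm (forced_response A t z))\<^sup>2)"
  unfolding clipped_energy_def
  by (intro arg_cong[where f="\<lambda>x. _ * x"] sum.cong refl arg_cong[where f="\<lambda>x. (norm x)\<^sup>2"]
      forced_response_cong) (auto simp: assms clip_eq_self)

lemma borel_measurable_vec_nth [measurable (raw)]:
  "f \<in> borel_measurable M \<Longrightarrow> (\<lambda>\<omega>. (f \<omega>::real^'n) $ i) \<in> borel_measurable M"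
  using measurable_comp[of f M borel "\<lambda>v. v $ i" borel]
    borel_measurable_continuous_onI[OF linear_continuous_on[OF bounded_linear_vec_nth]]
  by (simp add: comp_def)

lemma borel_measurable_matrix_vector_mult [measurable (raw)]:
  "f \<in> borel_measurable M \<Longrightarrow> (\<lambda>\<omega>. (A::real^'n^'m) *v f \<omega>) \<in> borel_measurable M"
  using measurable_comp[of f M borel "\<lambda>v. A *v v" borel]
    borel_measurable_continuous_onI[OF linear_continuous_on[OF matrix_vector_mul_bounded_linear[of A]]]
  by (simp add: comp_def)

lemma clipped_energy_measurable:
  "clipped_energy A s T \<in> borel_measurable (PiM {..<T} (\<lambda>_. borel))"
proof -
  have "(\<lambda>z. matpow A m *v clip s (z k)) \<in> borel_measurable (PiM {..<T} (\<lambda>_. borel))"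
    if "k < T" for k m
  proof -
    have [measurable]: "(\<lambda>z. z k) \<in> measurable (PiM {..<T} (\<lambda>_. borel)) borel"
      using that by (intro measurable_component_singleton) auto
    show ?thesis by measurable
  qed
  then have [measurable]: "(\<lambda>z. forced_response A t (\<lambda>k. clip s (z k)))
      \<in> borel_measurable (PiM {..<T} (\<lambda>_. borel))" if "t \<le> T" for t
    unfolding forced_response_def using that by (intro borel_measurable_sum) auto
  show ?thesis unfolding clipped_energy_def
    by (intro borel_measurable_times borel_measurable_const borel_measurable_sum) auto
qed

lemma abs_power2_norm_diff_le:
  "\<bar>(norm u)\<^sup>2 - (norm v)\<^sup>2\<bar> \<le> norm (u - v) * (norm u + norm (v::'a::real_normed_vector))"
proof -
  have "(norm u)\<^sup>2 - (norm v)\<^sup>2 = (norm u + norm v) * (norm u - norm v)"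
    by (simp add: power2_eq_square algebra_simps)
  then have "\<bar>(norm u)\<^sup>2 - (norm v)\<^sup>2\<bar> = \<bar>norm u - norm v\<bar> * (norm u + norm v)"
    by (simp add: abs_mult)
  also have "\<dots> \<le> norm (u - v) * (norm u + norm v)"
    by (intro mult_right_mono norm_triangle_ineq3) auto
  finally show ?thesis .
qed

context matrix_contraction
begin

lemma abs_clipped_energy_le:
  assumes "0 \<le> s"
  shows "\<bar>clipped_energy A s T z\<bar> \<le> (s / (1 - \<rho>))\<^sup>2"
proof -
  have "(\<Sum>t\<in>{1..T}. (norm (forced_response A t (\<lambda>k. clip s (z k))))\<^sup>2) \<le> real T * (s / (1 - \<rho>))\<^sup>2"
    using sum_mono[of "{1..T}" _ "\<lambda>_. (s / (1 - \<rho>))\<^sup>2"]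
      norm_forced_response_bounded[OF assms norm_clip_le[OF assms]]
    by (simp add: power_mono)
  moreover have "0 \<le> clipped_energy A s T z"
    unfolding clipped_energy_def by (intro mult_nonneg_nonneg sum_nonneg) auto
  ultimately show ?thesis unfolding clipped_energy_def
    by (cases "T = 0") (auto simp: field_simps)
qed

text \<open>Changing the \<open>k\<close>-th input moves the \<open>t\<close>-th clipped response by at most
  \<open>2 s \<rho>\<^bsup>t-1-k\<^esup>\<close>; summing the geometric tail over \<open>t\<close> gives a change of \<open>O(1/T)\<close>.\<close>
lemma clipped_energy_bounded_differences:
  assumes s: "0 \<le> s"
  shows "\<bar>clipped_energy A s T z - clipped_energy A s T (z(k:=y))\<bar> \<le> 4 * s\<^sup>2 / ((1 - \<rho>)\<^sup>2 * real T)"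
proof -
  define u where "u t = forced_response A t (\<lambda>j. clip s (z j))" for t
  define v where "v t = forced_response A t (\<lambda>j. clip s ((z(k:=y)) j))" for t
  have uv: "norm (u t - v t) \<le> 2 * s * (if k < t then \<rho>^(t - 1 - k) else 0)" for t
  proof -
    have "norm (u t - v t) \<le> (\<Sum>j<t. \<rho>^(t - 1 - j) * norm (clip s (z j) - clip s ((z(k:=y)) j)))"
      unfolding u_def v_def forced_response_diff by (rule norm_forced_response_le)
    also have "\<dots> \<le> (\<Sum>j<t. if j = k then \<rho>^(t - 1 - j) * (2 * s) else 0)"
    proof (rule sum_mono)
      have "norm (clip s (z k) - clip s y) \<le> 2 * s"
        using norm_triangle_ineq4[of "clip s (z k)"] norm_clip_le[OF s] by (smt (verit))
      then show "\<rho>^(t - 1 - j) * norm (clip s (z j) - clip s ((z(k:=y)) j))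
          \<le> (if j = k then \<rho>^(t - 1 - j) * (2 * s) else 0)" for j
        using rate_nonneg by (simp add: mult_left_mono)
    qed
    finally have "norm (u t - v t) \<le> (if k < t then \<rho>^(t - 1 - k) * (2 * s) else 0)"
      by (simp add: sum.delta)
    then show ?thesis by (cases "k < t") (simp_all add: mult_ac)
  qed
  have uv_sum: "norm (u t) + norm (v t) \<le> 2 * s / (1 - \<rho>)" for t
  proof -
    have "2 * s / (1 - \<rho>) = s / (1 - \<rho>) + s / (1 - \<rho>)" by simp
    then show ?thesis
      using norm_forced_response_bounded[OF s norm_clip_le[OF s], of t z]
        norm_forced_response_bounded[OF s norm_clip_le[OF s], of t "z(k:=y)"]
      unfolding u_def v_def by linarith
  qed
  have "(\<Sum>t\<in>{1..T}. \<bar>(norm (u t))\<^sup>2 - (norm (v t))\<^sup>2\<bar>)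
      \<le> (\<Sum>t\<in>{1..T}. (4 * s\<^sup>2 / (1 - \<rho>)) * (if k < t then \<rho>^(t - 1 - k) else 0))"
  proof (rule sum_mono)
    fix t
    have "\<bar>(norm (u t))\<^sup>2 - (norm (v t))\<^sup>2\<bar> \<le> norm (u t - v t) * (norm (u t) + norm (v t))"
      by (rule abs_power2_norm_diff_le)
    also have "\<dots> \<le> 2 * s * (if k < t then \<rho>^(t - 1 - k) else 0) * (2 * s / (1 - \<rho>))"
      by (rule mult_mono[OF uv uv_sum]) (use s rate_nonneg in auto)
    finally show "\<bar>(norm (u t))\<^sup>2 - (norm (v t))\<^sup>2\<bar> \<le> (4 * s\<^sup>2 / (1 - \<rho>)) * (if k < t then \<rho>^(t - 1 - k) else 0)"
      by (simp add: power2_eq_square mult_ac)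
  qed
  also have "\<dots> \<le> (4 * s\<^sup>2 / (1 - \<rho>)) * (1 / (1 - \<rho>))"
  proof -
    have "(\<Sum>t\<in>{1..T}. if k < t then \<rho>^(t - 1 - k) else 0) \<le> (\<Sum>t<Suc T. if k < t then \<rho>^(t - 1 - k) else 0)"
      by (rule sum_mono2) (use rate_nonneg in auto)
    also have "\<dots> \<le> 1 / (1 - \<rho>)" by (rule sum_power_after_le[OF rate_nonneg rate_less_one])
    finally have "(4 * s\<^sup>2 / (1 - \<rho>)) * (\<Sum>t\<in>{1..T}. if k < t then \<rho>^(t - 1 - k) else 0)
        \<le> (4 * s\<^sup>2 / (1 - \<rho>)) * (1 / (1 - \<rho>))"
      by (rule mult_left_mono) (use rate_less_one in simp)
    then show ?thesis by (simp only: sum_distrib_left)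
  qed
  finally have "(\<Sum>t\<in>{1..T}. \<bar>(norm (u t))\<^sup>2 - (norm (v t))\<^sup>2\<bar>) \<le> 4 * s\<^sup>2 / (1 - \<rho>)\<^sup>2"
    by (simp add: power2_eq_square)
  then have diffs: "(1 / real T) * (\<Sum>t\<in>{1..T}. \<bar>(norm (u t))\<^sup>2 - (norm (v t))\<^sup>2\<bar>)
      \<le> (1 / real T) * (4 * s\<^sup>2 / (1 - \<rho>)\<^sup>2)"
    by (rule mult_left_mono) simp
  have "\<bar>clipped_energy A s T z - clipped_energy A s T (z(k:=y))\<bar>
      = (1 / real T) * \<bar>\<Sum>t\<in>{1..T}. (norm (u t))\<^sup>2 - (norm (v t))\<^sup>2\<bar>"
    unfolding clipped_energy_def u_def v_def
    by (simp add: sum_subtractf abs_divide flip: diff_divide_distrib)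
  also have "\<dots> \<le> (1 / real T) * (\<Sum>t\<in>{1..T}. \<bar>(norm (u t))\<^sup>2 - (norm (v t))\<^sup>2\<bar>)"
    by (intro mult_left_mono sum_abs) auto
  finally show ?thesis using diffs by (simp add: field_simps)
qed

end

section \<open>Square-integrable random vectors and white noise\<close>

definition square_integrable :: "'a measure \<Rightarrow> ('a \<Rightarrow> real) \<Rightarrow> bool" where
  "square_integrable M f \<longleftrightarrow> f \<in> borel_measurable M \<and> integrable M (\<lambda>\<omega>. (f \<omega>)\<^sup>2)"

definition square_integrable_vec :: "'a measure \<Rightarrow> ('a \<Rightarrow> real^'n) \<Rightarrow> bool" where
  "square_integrable_vec M X \<longleftrightarrow> (\<forall>i. square_integrable M (\<lambda>\<omega>. X \<omega> $ i))"

lemma integrable_mult_square_integrable: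
  assumes "square_integrable M f" "square_integrable M g"
  shows "integrable M (\<lambda>\<omega>. f \<omega> * g \<omega>)"
proof (rule Bochner_Integration.integrable_bound[where f="\<lambda>\<omega>. (f \<omega>)\<^sup>2 + (g \<omega>)\<^sup>2"])
  show "integrable M (\<lambda>\<omega>. (f \<omega>)\<^sup>2 + (g \<omega>)\<^sup>2)" "(\<lambda>\<omega>. f \<omega> * g \<omega>) \<in> borel_measurable M"
    using assms by (auto simp: square_integrable_def)
  have "2 * \<bar>f x * g x\<bar> \<le> (f x)\<^sup>2 + (g x)\<^sup>2" for x
    using sum_squares_bound[of "\<bar>f x\<bar>" "\<bar>g x\<bar>"] by (simp add: abs_mult power2_abs)
  then have "\<bar>f x * g x\<bar> \<le> (f x)\<^sup>2 + (g x)\<^sup>2" for x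
    using abs_ge_zero[of "f x * g x"] by (smt (verit))
  then show "AE x in M. norm (f x * g x) \<le> norm ((f x)\<^sup>2 + (g x)\<^sup>2)"
    by (intro AE_I2) simp
qed

lemma square_integrable_add:
  "square_integrable M f \<Longrightarrow> square_integrable M g \<Longrightarrow> square_integrable M (\<lambda>\<omega>. f \<omega> + g \<omega>)"
  unfolding square_integrable_def power2_sum
  by (auto intro!: Bochner_Integration.integrable_add integrable_mult_right
      integrable_mult_square_integrable[unfolded square_integrable_def])

lemma square_integrable_scale: "square_integrable M f \<Longrightarrow> square_integrable M (\<lambda>\<omega>. c * f \<omega>)"
  unfolding square_integrable_def by (auto simp: power_mult_distrib)

lemma square_integrable_diff:
  "square_integrable M f \<Longrightarrow> square_integrable M g \<Longrightarrow> square_integrable M (\<lambda>\<omega>. f \<omega> - g \<omega>)"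
  using square_integrable_add[of M f "\<lambda>\<omega>. (-1) * g \<omega>"] square_integrable_scale[of M g "-1"] by simp

lemma (in prob_space) square_integrable_const: "square_integrable M (\<lambda>_. c)"
  unfolding square_integrable_def by simp

lemma (in prob_space) square_integrable_sum:
  "(\<And>k. k \<in> K \<Longrightarrow> square_integrable M (f k)) \<Longrightarrow> square_integrable M (\<lambda>\<omega>. \<Sum>k\<in>K. f k \<omega>)"
  by (induction K rule: infinite_finite_induct) (simp_all add: square_integrable_const square_integrable_add)

lemma (in prob_space) integrable_square_integrable:
  "square_integrable M f \<Longrightarrow> integrable M f"
  using integrable_mult_square_integrable[OF _ square_integrable_const, of f 1] by simp

lemma square_integrable_vec_add:
  "square_integrable_vec M X \<Longrightarrow> square_integrable_vec M Y \<Longrightarrow> square_integrable_vec M (\<lambda>\<omega>. X \<omega> + Y \<omega>)"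
  unfolding square_integrable_vec_def by (simp add: square_integrable_add)

lemma square_integrable_vec_diff:
  "square_integrable_vec M X \<Longrightarrow> square_integrable_vec M Y \<Longrightarrow> square_integrable_vec M (\<lambda>\<omega>. X \<omega> - Y \<omega>)"
  unfolding square_integrable_vec_def by (simp add: square_integrable_diff)

lemma square_integrable_vec_scaleR:
  "square_integrable_vec M X \<Longrightarrow> square_integrable_vec M (\<lambda>\<omega>. c *\<^sub>R X \<omega>)"
  unfolding square_integrable_vec_def by (simp add: square_integrable_scale)

lemma square_integrable_vec_scaleR_const:
  assumes "square_integrable M f"
  shows "square_integrable_vec M (\<lambda>\<omega>. f \<omega> *\<^sub>R v)"
  unfolding square_integrable_vec_def
proof
  show "square_integrable M (\<lambda>\<omega>. (f \<omega> *\<^sub>R v) $ i)" for i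
    using square_integrable_scale[OF assms, of "v $ i"] by (simp add: mult.commute)
qed

lemma (in prob_space) square_integrable_vec_const: "square_integrable_vec M (\<lambda>_. v)"
  unfolding square_integrable_vec_def by (simp add: square_integrable_const)

lemma (in prob_space) square_integrable_vec_sum:
  "(\<And>k. k \<in> K \<Longrightarrow> square_integrable_vec M (X k)) \<Longrightarrow> square_integrable_vec M (\<lambda>\<omega>. \<Sum>k\<in>K. X k \<omega>)"
  unfolding square_integrable_vec_def by (auto simp: sum_component intro!: square_integrable_sum)

lemma (in prob_space) square_integrable_vec_mult:
  "square_integrable_vec M X \<Longrightarrow> square_integrable_vec M (\<lambda>\<omega>. A *v X \<omega>)"
  unfolding square_integrable_vec_def matrix_vector_mult_def
  by (auto intro!: square_integrable_sum square_integrable_scale)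

lemma (in prob_space) square_integrable_vec_forced_response:
  "(\<And>k. square_integrable_vec M (X k))
     \<Longrightarrow> square_integrable_vec M (\<lambda>\<omega>. forced_response A t (\<lambda>k. X k \<omega>))"
  unfolding forced_response_def by (intro square_integrable_vec_sum square_integrable_vec_mult)

lemma (in prob_space) integrable_vec_nth:
  "square_integrable_vec M X \<Longrightarrow> integrable M (\<lambda>\<omega>. X \<omega> $ i)"
  unfolding square_integrable_vec_def by (auto intro: integrable_square_integrable)

lemma integrable_inner_square_integrable:
  "square_integrable_vec M X \<Longrightarrow> square_integrable_vec M Y \<Longrightarrow> integrable M (\<lambda>\<omega>. inner (X \<omega>) (Y \<omega>))"
  unfolding square_integrable_vec_def inner_vec_def inner_real_def
  by (intro Bochner_Integration.integrable_sum) (rule integrable_mult_square_integrable; blast)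

lemma integral_inner_square_integrable:
  "square_integrable_vec M X \<Longrightarrow> square_integrable_vec M Y
     \<Longrightarrow> (\<integral>\<omega>. inner (X \<omega>) (Y \<omega>) \<partial>M) = (\<Sum>i\<in>UNIV. \<integral>\<omega>. X \<omega> $ i * Y \<omega> $ i \<partial>M)"
  unfolding square_integrable_vec_def inner_vec_def
  by (subst Bochner_Integration.integral_sum) (auto intro: integrable_mult_square_integrable)

lemma integrable_norm_sq_square_integrable:
  "square_integrable_vec M X \<Longrightarrow> integrable M (\<lambda>\<omega>. (norm (X \<omega>))\<^sup>2)"
  unfolding power2_norm_eq_inner by (rule integrable_inner_square_integrable)

lemma (in prob_space) integral_mult_zero_mean:
  assumes "square_integrable_vec M X" "\<And>i. (\<integral>\<omega>. X \<omega> $ i \<partial>M) = 0"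
  shows "(\<integral>\<omega>. (A *v X \<omega>) $ i \<partial>M) = 0"
  unfolding matrix_vector_mult_def using integrable_vec_nth[OF assms(1)] assms(2)
  by (simp add: integral_sum)

lemma (in prob_space) integral_norm_mult_sq_second_moment:
  assumes "square_integrable_vec M X"
  shows "(\<integral>\<omega>. (norm (A *v X \<omega>))\<^sup>2 \<partial>M)
           = (\<Sum>i\<in>UNIV. \<Sum>p\<in>UNIV. \<Sum>q\<in>UNIV. A$i$p * A$i$q * second_moment M X $ p $ q)"
proof -
  have pq: "integrable M (\<lambda>\<omega>. X \<omega> $ p * X \<omega> $ q)" for p q
    using assms unfolding square_integrable_vec_def by (auto intro: integrable_mult_square_integrable)
  have AX: "square_integrable_vec M (\<lambda>\<omega>. A *v X \<omega>)" by (rule square_integrable_vec_mult[OF assms])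
  have "(\<integral>\<omega>. (norm (A *v X \<omega>))\<^sup>2 \<partial>M) = (\<Sum>i\<in>UNIV. \<integral>\<omega>. (A *v X \<omega>) $ i * (A *v X \<omega>) $ i \<partial>M)"
    unfolding power2_norm_eq_inner by (rule integral_inner_square_integrable[OF AX AX])
  also have "\<dots> = (\<Sum>i\<in>UNIV. \<integral>\<omega>. (\<Sum>p\<in>UNIV. \<Sum>q\<in>UNIV. A$i$p * A$i$q * (X \<omega> $ p * X \<omega> $ q)) \<partial>M)"
    by (intro sum.cong refl integral_cong) (simp add: matrix_vector_mult_def sum_product algebra_simps)
  also have "\<dots> = (\<Sum>i\<in>UNIV. \<Sum>p\<in>UNIV. \<Sum>q\<in>UNIV. A$i$p * A$i$q * (\<integral>\<omega>. X \<omega> $ p * X \<omega> $ q \<partial>M))"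
    using pq by (simp add: Bochner_Integration.integral_sum)
  finally show ?thesis by (simp add: second_moment_def)
qed

lemma (in prob_space) indep_vars_compose_pair:
  assumes ind: "indep_vars (\<lambda>_. borel) X UNIV" and jk: "j \<noteq> k"
    and f: "f \<in> borel_measurable borel" and g: "g \<in> borel_measurable borel"
  shows "indep_var borel (\<lambda>\<omega>. f (X j \<omega>)) borel (\<lambda>\<omega>. g (X k \<omega>))"
proof -
  have iv: "indep_var (PiM {j} (\<lambda>_. borel)) (\<lambda>\<omega>. restrict (\<lambda>i. X i \<omega>) {j})
                      (PiM {k} (\<lambda>_. borel)) (\<lambda>\<omega>. restrict (\<lambda>i. X i \<omega>) {k})"
    by (rule indep_var_restrict[OF ind]) (use jk in auto)
  have fj: "(\<lambda>h. f (h j)) \<in> measurable (PiM {j} (\<lambda>_. borel)) borel"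
    using measurable_comp[OF measurable_component_singleton[of j "{j}" "\<lambda>_. borel"] f]
    by (simp add: comp_def)
  have gk: "(\<lambda>h. g (h k)) \<in> measurable (PiM {k} (\<lambda>_. borel)) borel"
    using measurable_comp[OF measurable_component_singleton[of k "{k}" "\<lambda>_. borel"] g]
    by (simp add: comp_def)
  show ?thesis using indep_var_compose[OF iv fj gk] by (simp add: comp_def)
qed

lemma second_moment_cong:
  "(\<And>\<omega>. \<omega> \<in> space M \<Longrightarrow> X \<omega> = Y \<omega>) \<Longrightarrow> second_moment M X = second_moment M Y"
  unfolding second_moment_def by (simp add: vec_eq_iff cong: Bochner_Integration.integral_cong)

locale indep_white_noise = prob_space M for M :: "'a measure" +
  fixes w :: "nat \<Rightarrow> 'a \<Rightarrow> real^'n" and S :: "real^'n^'n"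
  assumes indep: "indep_vars (\<lambda>_. borel) w UNIV"
    and square_integrable: "square_integrable_vec M (w t)"
    and zero_mean: "(\<integral>\<omega>. w t \<omega> $ i \<partial>M) = 0"
    and second_moment_eq: "second_moment M (w t) = S"
begin

lemma noise_measurable [measurable]: "w t \<in> borel_measurable M"
  using indep unfolding indep_vars_def by blast

lemma forced_response_measurable [measurable]:
  "(\<lambda>\<omega>. forced_response A t (\<lambda>k. w k \<omega>)) \<in> borel_measurable M"
  unfolding forced_response_def by measurable

lemma integral_inner_mult_eq_0:
  assumes "j \<noteq> k"
  shows "(\<integral>\<omega>. inner (A *v w j \<omega>) (B *v w k \<omega>) \<partial>M) = 0"
proof -
  have sj: "square_integrable_vec M (\<lambda>\<omega>. A *v w j \<omega>)" and sk: "square_integrable_vec M (\<lambda>\<omega>. B *v w k \<omega>)"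
    by (intro square_integrable_vec_mult square_integrable)+
  have "(\<integral>\<omega>. inner (A *v w j \<omega>) (B *v w k \<omega>) \<partial>M)
      = (\<Sum>i\<in>UNIV. \<integral>\<omega>. (A *v w j \<omega>) $ i * (B *v w k \<omega>) $ i \<partial>M)"
    by (rule integral_inner_square_integrable[OF sj sk])
  also have "\<dots> = (\<Sum>i\<in>UNIV. (\<integral>\<omega>. (A *v w j \<omega>) $ i \<partial>M) * (\<integral>\<omega>. (B *v w k \<omega>) $ i \<partial>M))"
  proof (intro sum.cong refl indep_var_lebesgue_integral)
    show "indep_var borel (\<lambda>\<omega>. (A *v w j \<omega>) $ i) borel (\<lambda>\<omega>. (B *v w k \<omega>) $ i)" for i
      by (rule indep_vars_compose_pair[OF indep assms]) measurable
  qed (intro integrable_vec_nth sj sk)+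
  also have "\<dots> = 0"
    by (simp add: integral_mult_zero_mean[OF square_integrable zero_mean])
  finally show ?thesis .
qed

lemma integral_norm_sum_mult:
  assumes "finite K"
  shows "(\<integral>\<omega>. (norm (\<Sum>k\<in>K. A k *v w k \<omega>))\<^sup>2 \<partial>M) = (\<Sum>k\<in>K. \<integral>\<omega>. (norm (A k *v w k \<omega>))\<^sup>2 \<partial>M)"
  using assms
proof (induction K rule: finite_induct)
  case (insert j F)
  have sm: "square_integrable_vec M (\<lambda>\<omega>. A k *v w k \<omega>)" for k
    by (intro square_integrable_vec_mult square_integrable)
  define a where "a \<omega> = A j *v w j \<omega>" for \<omega>
  define b where "b \<omega> = (\<Sum>k\<in>F. A k *v w k \<omega>)" for \<omega>
  have sa: "square_integrable_vec M a" unfolding a_def by (rule sm)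
  have sb: "square_integrable_vec M b" unfolding b_def by (intro square_integrable_vec_sum sm)
  have "(\<integral>\<omega>. inner (a \<omega>) (b \<omega>) \<partial>M) = (\<Sum>k\<in>F. \<integral>\<omega>. inner (a \<omega>) (A k *v w k \<omega>) \<partial>M)"
    unfolding b_def inner_sum_right
    by (subst Bochner_Integration.integral_sum) (auto intro!: integrable_inner_square_integrable sa sm)
  also have "\<dots> = 0"
    unfolding a_def using insert(2) by (intro sum.neutral ballI integral_inner_mult_eq_0) auto
  finally have ab: "(\<integral>\<omega>. inner (a \<omega>) (b \<omega>) \<partial>M) = 0" .
  have "(\<integral>\<omega>. (norm (\<Sum>k\<in>insert j F. A k *v w k \<omega>))\<^sup>2 \<partial>M)
      = (\<integral>\<omega>. (norm (a \<omega>))\<^sup>2 + 2 * inner (a \<omega>) (b \<omega>) + (norm (b \<omega>))\<^sup>2 \<partial>M)"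
    using insert(1,2) unfolding a_def b_def
    by (intro Bochner_Integration.integral_cong refl)
      (simp add: power2_norm_eq_inner inner_add_left inner_add_right inner_commute algebra_simps)
  also have "\<dots> = (\<integral>\<omega>. (norm (a \<omega>))\<^sup>2 \<partial>M) + (\<integral>\<omega>. (norm (b \<omega>))\<^sup>2 \<partial>M)"
    using integrable_norm_sq_square_integrable[OF sa] integrable_norm_sq_square_integrable[OF sb]
      integrable_inner_square_integrable[OF sa sb] ab
    by simp
  also have "\<dots> = (\<Sum>k\<in>insert j F. \<integral>\<omega>. (norm (A k *v w k \<omega>))\<^sup>2 \<partial>M)"
    using insert unfolding a_def b_def by simp
  finally show ?case .
qed simp

lemma integral_norm_forced_response:
  "(\<integral>\<omega>. (norm (forced_response A t (\<lambda>k. w k \<omega>)))\<^sup>2 \<partial>M)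
     = (\<Sum>j<t. \<integral>\<omega>. (norm (matpow A j *v w 0 \<omega>))\<^sup>2 \<partial>M)"
proof -
  have same: "(\<integral>\<omega>. (norm (B *v w k \<omega>))\<^sup>2 \<partial>M) = (\<integral>\<omega>. (norm (B *v w 0 \<omega>))\<^sup>2 \<partial>M)" for B k
    unfolding integral_norm_mult_sq_second_moment[OF square_integrable] second_moment_eq ..
  have "(\<integral>\<omega>. (norm (forced_response A t (\<lambda>k. w k \<omega>)))\<^sup>2 \<partial>M)
      = (\<Sum>k<t. \<integral>\<omega>. (norm (matpow A (t - Suc k) *v w k \<omega>))\<^sup>2 \<partial>M)"
    unfolding forced_response_def by (simp add: integral_norm_sum_mult)
  also have "\<dots> = (\<Sum>k<t. \<integral>\<omega>. (norm (matpow A (t - Suc k) *v w 0 \<omega>))\<^sup>2 \<partial>M)"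
    by (intro sum.cong refl same)
  also have "\<dots> = (\<Sum>j<t. \<integral>\<omega>. (norm (matpow A j *v w 0 \<omega>))\<^sup>2 \<partial>M)"
    by (rule sum.nat_diff_reindex)
  finally show ?thesis .
qed

lemma mtrace_second_moment_shifted_response:
  "mtrace (second_moment M (\<lambda>\<omega>. c + forced_response A t (\<lambda>k. w k \<omega>)))
     = (norm c)\<^sup>2 + (\<integral>\<omega>. (norm (forced_response A t (\<lambda>k. w k \<omega>)))\<^sup>2 \<partial>M)"
proof -
  define e where "e \<omega> = forced_response A t (\<lambda>k. w k \<omega>)" for \<omega>
  have se: "square_integrable_vec M e"
    unfolding e_def by (intro square_integrable_vec_forced_response square_integrable)
  have sce: "square_integrable_vec M (\<lambda>\<omega>. c + e \<omega>)"
    by (intro square_integrable_vec_add square_integrable_vec_const se)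
  have mean_e: "(\<integral>\<omega>. e \<omega> $ i \<partial>M) = 0" for i
    unfolding e_def forced_response_def sum_component
    by (subst Bochner_Integration.integral_sum)
      (auto intro!: integrable_vec_nth square_integrable_vec_mult square_integrable
        simp: integral_mult_zero_mean[OF square_integrable zero_mean])
  have ce: "(\<integral>\<omega>. inner c (e \<omega>) \<partial>M) = 0"
    using mean_e by (simp add: integral_inner_square_integrable[OF square_integrable_vec_const se])
  have "mtrace (second_moment M (\<lambda>\<omega>. c + e \<omega>)) = (\<integral>\<omega>. inner (c + e \<omega>) (c + e \<omega>) \<partial>M)"
    unfolding mtrace_def second_moment_def
    by (simp add: integral_inner_square_integrable[OF sce sce])
  also have "\<dots> = (\<integral>\<omega>. inner c c + 2 * inner c (e \<omega>) + (norm (e \<omega>))\<^sup>2 \<partial>M)"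
    by (intro Bochner_Integration.integral_cong refl)
      (simp add: inner_add_left inner_add_right inner_commute power2_norm_eq_inner)
  also have "\<dots> = (norm c)\<^sup>2 + (\<integral>\<omega>. (norm (e \<omega>))\<^sup>2 \<partial>M)"
    using integrable_inner_square_integrable[OF square_integrable_vec_const se, of c]
      integrable_norm_sq_square_integrable[OF se] ce
    by (simp add: prob_space power2_norm_eq_inner)
  finally show ?thesis unfolding e_def .
qed

lemma integral_norm_forced_response_le_trace_limit:
  assumes "(\<lambda>t. second_moment M (\<lambda>\<omega>. matpow A t *v v + forced_response A t (\<lambda>k. w k \<omega>))) \<longlonglongrightarrow> \<Sigma>"
  shows "(\<integral>\<omega>. (norm (forced_response A t (\<lambda>k. w k \<omega>)))\<^sup>2 \<partial>M) \<le> mtrace \<Sigma>"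
proof -
  define \<phi> where "\<phi> j = (\<integral>\<omega>. (norm (matpow A j *v w 0 \<omega>))\<^sup>2 \<partial>M)" for j
  have "(\<lambda>t'. mtrace (second_moment M (\<lambda>\<omega>. matpow A t' *v v + forced_response A t' (\<lambda>k. w k \<omega>))))
      \<longlonglongrightarrow> mtrace \<Sigma>"
    unfolding mtrace_def by (intro tendsto_intros assms)
  moreover have "(\<Sum>j<t. \<phi> j)
      \<le> mtrace (second_moment M (\<lambda>\<omega>. matpow A t' *v v + forced_response A t' (\<lambda>k. w k \<omega>)))"
    if "t \<le> t'" for t'
  proof -
    have "(\<Sum>j<t. \<phi> j) \<le> (\<Sum>j<t'. \<phi> j)"
      using that by (intro sum_mono2) (auto simp: \<phi>_def)
    moreover have "mtrace (second_moment M (\<lambda>\<omega>. matpow A t' *v v + forced_response A t' (\<lambda>k. w k \<omega>)))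
        = (norm (matpow A t' *v v))\<^sup>2 + (\<Sum>j<t'. \<phi> j)"
      by (simp add: mtrace_second_moment_shifted_response integral_norm_forced_response \<phi>_def)
    ultimately show ?thesis using zero_le_power2[of "norm (matpow A t' *v v)"] by linarith
  qed
  ultimately have "(\<Sum>j<t. \<phi> j) \<le> mtrace \<Sigma>"
    by (intro LIMSEQ_le_const) auto
  then show ?thesis by (simp add: integral_norm_forced_response \<phi>_def)
qed

end

lemma mtrace_scaleR_sum_outer_diff:
  "mtrace ((1 / real T) *\<^sub>R (\<Sum>t\<in>{1..T}. outer (v t)) - \<Sigma>)
     = (1 / real T) * (\<Sum>t\<in>{1..T}. (norm (v t))\<^sup>2) - mtrace \<Sigma>"
proof -
  have "(norm (v t))\<^sup>2 = (\<Sum>i\<in>UNIV. v t $ i * v t $ i)" for t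
    by (simp add: power2_norm_eq_inner inner_vec_def)
  then show ?thesis unfolding mtrace_def outer_def
    by (simp add: sum_subtractf sum_distrib_left sum_component) (rule sum.swap)
qed

lemma exp_regret_exponent_le:
  fixes N :: real
  assumes N: "N \<ge> 1" and \<delta>: "0 < \<delta>" "\<delta> < 1" and b: "b > 0" and T: "T > 0" and \<rho>: "\<rho> < 1"
  defines "\<epsilon> \<equiv> 1 / sqrt T * (8 * b\<^sup>2 * sqrt (2 * ln (N / \<delta>)) / (1 - \<rho>)\<^sup>2)"
  shows "exp (- \<epsilon>\<^sup>2 * T * (1 - \<rho>)^4 / (32 * b^4)) \<le> \<delta>" and "\<epsilon> > 0"
proof -
  define L where "L = ln (N / \<delta>)"
  have L: "L > 0" using N \<delta> unfolding L_def by (intro ln_gt_zero) (simp add: field_simps)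
  have pow4: "x^4 = (x\<^sup>2)\<^sup>2" for x :: real by (simp add: power4_eq_xxxx power2_eq_square)
  have "\<epsilon>\<^sup>2 = (8 * b\<^sup>2 * sqrt (2 * L))\<^sup>2 / (sqrt T * (1 - \<rho>)\<^sup>2)\<^sup>2"
    by (simp add: \<epsilon>_def L_def power_divide)
  also have "\<dots> = 128 * (b\<^sup>2)\<^sup>2 * L / (T * ((1 - \<rho>)\<^sup>2)\<^sup>2)"
    using L T by (simp add: power_mult_distrib)
  finally have e2: "\<epsilon>\<^sup>2 = 128 * (b\<^sup>2)\<^sup>2 * L / (T * ((1 - \<rho>)\<^sup>2)\<^sup>2)" .
  have cancel: "e * T * R / (32 * B) = 4 * L" if "B > 0" "R > 0" "e = 128 * B * L / (T * R)" for e B R :: real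
    using that T by simp
  have "\<epsilon>\<^sup>2 * T * (1 - \<rho>)^4 / (32 * b^4) = 4 * L"
    unfolding pow4 by (rule cancel[OF _ _ e2]) (use b \<rho> in auto)
  moreover have "ln (1 / \<delta>) \<le> L"
    using N \<delta> unfolding L_def by (intro ln_mono) (auto simp: divide_right_mono)
  then have "- 4 * L \<le> ln \<delta>" using L \<delta> by (simp add: ln_div)
  ultimately have "- \<epsilon>\<^sup>2 * T * (1 - \<rho>)^4 / (32 * b^4) \<le> ln \<delta>"
    by (simp add: minus_divide_left)
  then have "exp (- \<epsilon>\<^sup>2 * T * (1 - \<rho>)^4 / (32 * b^4)) \<le> exp (ln \<delta>)" by simp
  then show "exp (- \<epsilon>\<^sup>2 * T * (1 - \<rho>)^4 / (32 * b^4)) \<le> \<delta>" using \<delta> by simp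
  show "\<epsilon> > 0" using L T b \<rho> by (simp add: \<epsilon>_def L_def)
qed

lemma one_div_mult_le_of_le:
  fixes x B :: real
  assumes "x \<le> B" "0 \<le> B" "N \<ge> 1"
  shows "(1 / N) * x \<le> B"
proof (cases "0 \<le> x")
  case True
  then have "x \<le> N * x" using assms(3) mult_right_mono[of 1 N x] by simp
  then have "(1 / N) * x \<le> x" using assms(3) by (simp add: field_simps)
  then show ?thesis using assms(1) by linarith
next
  case False
  then have "(1 / N) * x \<le> 0" using assms(3) by (simp add: divide_nonpos_pos)
  then show ?thesis using assms(2) by linarith
qed

locale white_noise_contraction = indep_white_noise M w S + matrix_contraction A \<rho>
  for M :: "'a measure" and w :: "nat \<Rightarrow> 'a \<Rightarrow> real^'n" and S and A :: "real^'n^'n" and \<rho>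
begin

lemma clipped_energy_noise_measurable:
  "(\<lambda>\<omega>. clipped_energy A b T (restrict (\<lambda>k. w k \<omega>) {..<T})) \<in> borel_measurable M"
proof -
  have "(\<lambda>\<omega>. restrict (\<lambda>k. w k \<omega>) {..<T}) \<in> measurable M (PiM {..<T} (\<lambda>_. borel))"
    by (intro measurable_restrict) measurable
  from measurable_comp[OF this clipped_energy_measurable] show ?thesis by (simp add: comp_def)
qed

lemma integral_clipped_energy_le_trace:
  assumes bound: "AE \<omega> in M. \<forall>t\<le>T. norm (w t \<omega>) \<le> b" and T: "T \<ge> 1"
    and lim: "(\<lambda>t. second_moment M (\<lambda>\<omega>. matpow A t *v v + forced_response A t (\<lambda>k. w k \<omega>))) \<longlonglongrightarrow> \<Sigma>"
  shows "(\<integral>\<omega>. clipped_energy A b T (restrict (\<lambda>k. w k \<omega>) {..<T}) \<partial>M) \<le> mtrace \<Sigma>"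
proof -
  have int: "integrable M (\<lambda>\<omega>. (norm (forced_response A t (\<lambda>k. w k \<omega>)))\<^sup>2)" for t
    by (intro integrable_norm_sq_square_integrable square_integrable_vec_forced_response square_integrable)
  have "AE \<omega> in M. clipped_energy A b T (restrict (\<lambda>k. w k \<omega>) {..<T})
      = (1 / real T) * (\<Sum>t\<in>{1..T}. (norm (forced_response A t (\<lambda>k. w k \<omega>)))\<^sup>2)"
    using bound by (rule eventually_mono) (rule clipped_energy_restrict, auto)
  then have "(\<integral>\<omega>. clipped_energy A b T (restrict (\<lambda>k. w k \<omega>) {..<T}) \<partial>M)
      = (\<integral>\<omega>. (1 / real T) * (\<Sum>t\<in>{1..T}. (norm (forced_response A t (\<lambda>k. w k \<omega>)))\<^sup>2) \<partial>M)"
    by (intro integral_cong_AE clipped_energy_noise_measurable) measurable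
  also have "\<dots> = (1 / real T) * (\<Sum>t\<in>{1..T}. \<integral>\<omega>. (norm (forced_response A t (\<lambda>k. w k \<omega>)))\<^sup>2 \<partial>M)"
    using int by simp
  also have "\<dots> \<le> (1 / real T) * (\<Sum>t\<in>{1..T}. mtrace \<Sigma>)"
    by (intro mult_left_mono sum_mono integral_norm_forced_response_le_trace_limit[OF lim]) auto
  also have "\<dots> = mtrace \<Sigma>" using T by simp
  finally show ?thesis .
qed

theorem mean_energy_tail_bound:
  fixes v :: "real^'n" and T :: nat and b :: real
  defines "E \<equiv> \<lambda>\<omega>. (1 / real T) * (\<Sum>t\<in>{1..T}. (norm (matpow A t *v v + forced_response A t (\<lambda>k. w k \<omega>)))\<^sup>2)"
    and "D \<equiv> (norm v)\<^sup>2 / (1 - \<rho>\<^sup>2) + 2 * b * norm v / (1 - \<rho>)\<^sup>2"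
  assumes bound: "AE \<omega> in M. \<forall>t\<le>T. norm (w t \<omega>) \<le> b" and b: "b > 0" and T: "T \<ge> 1"
    and lim: "(\<lambda>t. second_moment M (\<lambda>\<omega>. matpow A t *v v + forced_response A t (\<lambda>k. w k \<omega>))) \<longlonglongrightarrow> \<Sigma>"
    and \<epsilon>: "\<epsilon> > 0"
  shows "prob {\<omega> \<in> space M. E \<omega> - mtrace \<Sigma> \<le> D / real T + \<epsilon>}
           \<ge> 1 - exp (- \<epsilon>\<^sup>2 * real T * (1 - \<rho>)^4 / (32 * b^4))"
proof -
  define G where "G \<omega> = clipped_energy A b T (restrict (\<lambda>k. w k \<omega>) {..<T})" for \<omega>
  define c where "c = 4 * b\<^sup>2 / ((1 - \<rho>)\<^sup>2 * real T)"
  define Bad where "Bad = {\<omega> \<in> space M. (\<integral>\<omega>. G \<omega> \<partial>M) + \<epsilon> \<le> G \<omega>}"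
  have [measurable]: "G \<in> borel_measurable M"
    unfolding G_def by (rule clipped_energy_noise_measurable)
  have c: "c > 0" using b T rate_less_one by (simp add: c_def)
  have b0: "0 \<le> b" using b by simp
  have "prob Bad \<le> exp (- \<epsilon>\<^sup>2 / (2 * real T * c\<^sup>2))"
    unfolding Bad_def G_def
  proof (rule mcdiarmid_inequality[OF indep_vars_subset[OF indep] _ clipped_energy_measurable])
    show "\<bar>clipped_energy A b T z\<bar> \<le> (b / (1 - \<rho>))\<^sup>2" for z
      by (rule abs_clipped_energy_le[OF b0])
    show "\<bar>clipped_energy A b T z - clipped_energy A b T (z(k:=y))\<bar> \<le> c" for z k y
      unfolding c_def by (rule clipped_energy_bounded_differences[OF b0])
  qed (use T c \<epsilon> in auto)
  also have "- \<epsilon>\<^sup>2 / (2 * real T * c\<^sup>2) = - \<epsilon>\<^sup>2 * real T * (1 - \<rho>)^4 / (32 * b^4)"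
    using T b rate_less_one by (simp add: c_def field_simps power2_eq_square power4_eq_xxxx)
  finally have bad: "prob Bad \<le> exp (- \<epsilon>\<^sup>2 * real T * (1 - \<rho>)^4 / (32 * b^4))" .
  have "AE \<omega> in M. \<omega> \<in> space M - Bad \<longrightarrow> E \<omega> - mtrace \<Sigma> \<le> D / real T + \<epsilon>"
    using bound
  proof (rule eventually_mono, intro impI)
    fix \<omega> assume bw: "\<forall>t\<le>T. norm (w t \<omega>) \<le> b" and "\<omega> \<in> space M - Bad"
    define F where "F = (\<Sum>t\<in>{1..T}. (norm (forced_response A t (\<lambda>k. w k \<omega>)))\<^sup>2)"
    have "G \<omega> < (\<integral>\<omega>. G \<omega> \<partial>M) + \<epsilon>" using \<open>\<omega> \<in> space M - Bad\<close> by (auto simp: Bad_def)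
    also have "(\<integral>\<omega>. G \<omega> \<partial>M) \<le> mtrace \<Sigma>"
      unfolding G_def by (rule integral_clipped_energy_le_trace[OF bound T lim])
    finally have "G \<omega> < mtrace \<Sigma> + \<epsilon>" by simp
    moreover have "G \<omega> = (1 / real T) * F"
      unfolding G_def F_def by (rule clipped_energy_restrict) (use bw in auto)
    moreover have "E \<omega> \<le> (1 / real T) * (D + F)"
      unfolding E_def D_def F_def
      by (intro mult_left_mono sum_norm_sq_response_le) (use b bw in auto)
    moreover have "(1 / real T) * (D + F) = D / real T + (1 / real T) * F"
      by (simp add: distrib_left)
    ultimately show "E \<omega> - mtrace \<Sigma> \<le> D / real T + \<epsilon>" by linarith
  qed
  then have "prob (space M - Bad) \<le> prob {\<omega> \<in> space M. E \<omega> - mtrace \<Sigma> \<le> D / real T + \<epsilon>}"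
    by (intro finite_measure_mono_AE) (auto simp: E_def)
  moreover have "prob (space M - Bad) = 1 - prob Bad"
    by (rule prob_compl) (simp add: Bad_def)
  ultimately show ?thesis using bad by simp
qed

end

theorem (in white_noise_contraction) regret_bound:
  fixes \<xi> :: "nat \<Rightarrow> 'a \<Rightarrow> real^'n" and v :: "real^'n" and T :: nat
  assumes response: "\<And>t \<omega>. \<omega> \<in> space M \<Longrightarrow> \<xi> t \<omega> = matpow A t *v v + forced_response A t (\<lambda>k. w k \<omega>)"
    and bound: "AE \<omega> in M. \<forall>t\<le>T. norm (w t \<omega>) \<le> b" and b: "b > 0" and T: "T \<ge> 1"
    and lim: "(\<lambda>t. second_moment M (\<xi> t)) \<longlonglongrightarrow> \<Sigma>" and \<delta>: "0 < \<delta>" "\<delta> < 1"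
  shows "measure M {\<omega> \<in> space M.
           (1 / real CARD('n)) * mtrace ((1 / real T) *\<^sub>R (\<Sum>t\<in>{1..T}. outer (\<xi> t \<omega>)) - \<Sigma>)
           \<le> 1 / real T * ((norm v)\<^sup>2 / (1 - \<rho>\<^sup>2))
            + 1 / real T * (2 * b * norm v / (1 - \<rho>)\<^sup>2)
            + 1 / real T * (b\<^sup>2 / (1 - \<rho>\<^sup>2)\<^sup>2)
            + 1 / sqrt (real T) * (8 * b\<^sup>2 * sqrt (2 * ln (real CARD('n) / \<delta>)) / (1 - \<rho>)\<^sup>2)}
         \<ge> 1 - \<delta>"
    (is "measure M {\<omega> \<in> space M. ?regret \<omega> \<le> ?bound} \<ge> _")
proof -
  define \<epsilon> where "\<epsilon> = 1 / sqrt (real T) * (8 * b\<^sup>2 * sqrt (2 * ln (real CARD('n) / \<delta>)) / (1 - \<rho>)\<^sup>2)"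
  define E where "E \<omega> = (1 / real T) * (\<Sum>t\<in>{1..T}. (norm (matpow A t *v v + forced_response A t (\<lambda>k. w k \<omega>)))\<^sup>2)" for \<omega>
  define D where "D = (norm v)\<^sup>2 / (1 - \<rho>\<^sup>2) + 2 * b * norm v / (1 - \<rho>)\<^sup>2"
  have N: "real CARD('n) \<ge> 1" by simp
  note \<epsilon>_props = exp_regret_exponent_le[OF N \<delta> b _ rate_less_one, of "real T", folded \<epsilon>_def]
  have lim': "(\<lambda>t. second_moment M (\<lambda>\<omega>. matpow A t *v v + forced_response A t (\<lambda>k. w k \<omega>))) \<longlonglongrightarrow> \<Sigma>"
    using lim by (simp add: response cong: second_moment_cong)
  have regret_eq: "?regret \<omega> = (1 / real CARD('n)) * (E \<omega> - mtrace \<Sigma>)" if "\<omega> \<in> space M" for \<omega>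
    unfolding response[OF that] mtrace_scaleR_sum_outer_diff E_def ..
  have "1 - \<delta> \<le> 1 - exp (- \<epsilon>\<^sup>2 * real T * (1 - \<rho>)^4 / (32 * b^4))"
    using \<epsilon>_props T by simp
  also have "\<dots> \<le> prob {\<omega> \<in> space M. E \<omega> - mtrace \<Sigma> \<le> D / real T + \<epsilon>}"
    unfolding E_def D_def using \<epsilon>_props T by (intro mean_energy_tail_bound[OF bound b T lim']) auto
  also have "\<dots> \<le> prob {\<omega> \<in> space M. (1 / real CARD('n)) * (E \<omega> - mtrace \<Sigma>) \<le> ?bound}"
  proof (rule finite_measure_mono)
    have "?bound = D / real T + (b\<^sup>2 / (1 - \<rho>\<^sup>2)\<^sup>2) / real T + \<epsilon>"
      unfolding D_def \<epsilon>_def by (simp add: add_divide_distrib mult.commute)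
    moreover have "0 \<le> D / real T" "0 \<le> (b\<^sup>2 / (1 - \<rho>\<^sup>2)\<^sup>2) / real T"
      using b rate_nonneg rate_less_one by (auto simp: D_def power_le_one)
    ultimately have bound: "D / real T + \<epsilon> \<le> ?bound" "0 \<le> ?bound"
      using \<epsilon>_props(2) T by auto
    show "{\<omega> \<in> space M. E \<omega> - mtrace \<Sigma> \<le> D / real T + \<epsilon>}
        \<subseteq> {\<omega> \<in> space M. (1 / real CARD('n)) * (E \<omega> - mtrace \<Sigma>) \<le> ?bound}"
    proof (intro subsetI CollectI conjI)
      fix \<omega> assume "\<omega> \<in> {\<omega> \<in> space M. E \<omega> - mtrace \<Sigma> \<le> D / real T + \<epsilon>}"
      then have "\<omega> \<in> space M" and le: "E \<omega> - mtrace \<Sigma> \<le> D / real T + \<epsilon>" by auto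
      show "\<omega> \<in> space M" by fact
      show "(1 / real CARD('n)) * (E \<omega> - mtrace \<Sigma>) \<le> ?bound"
        by (rule one_div_mult_le_of_le[OF order_trans[OF le bound(1)] bound(2)]) simp
    qed
    show "{\<omega> \<in> space M. (1 / real CARD('n)) * (E \<omega> - mtrace \<Sigma>) \<le> ?bound} \<in> sets M"
      unfolding E_def by measurable
  qed
  also have "\<dots> = measure M {\<omega> \<in> space M. ?regret \<omega> \<le> ?bound}"
    by (intro arg_cong[where f="measure M"] Collect_cong) (metis regret_eq)
  finally show ?thesis .
qed

section \<open>The consensus estimators\<close>

lemma estimation_error_step:
  fixes P :: "real^'n^'n" and e e' w s :: "real^'n"
  assumes P1: "P *v 1 = 1" and state: "x' = a * x + r"
    and est: "(e' = a *\<^sub>R (P *v e + \<alpha> *\<^sub>R ((\<chi> i. x) + w - e)) \<and> s = (\<alpha> * a) *\<^sub>R w - r *\<^sub>R 1)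
            \<or> (e' = a *\<^sub>R (P *v e + \<alpha> *\<^sub>R (P *v ((\<chi> i. x) + w) - e)) \<and> s = (\<alpha> * a) *\<^sub>R (P *v w) - r *\<^sub>R 1)"
  shows "e' - x' *\<^sub>R 1 = (a *\<^sub>R (P - \<alpha> *\<^sub>R mat 1)) *v (e - x *\<^sub>R 1) + s"
proof -
  have Qv: "(a *\<^sub>R (P - \<alpha> *\<^sub>R mat 1)) *v u = a *\<^sub>R (P *v u - \<alpha> *\<^sub>R u)" for u
    by (simp add: scaleR_matrix_vector_assoc[symmetric] matrix_vector_mult_diff_rdistrib
        scaleR_matrix_vector_assoc[of \<alpha> "mat 1", symmetric])
  have chi: "(\<chi> i. x) = x *\<^sub>R (1::real^'n)" by (simp add: vec_eq_iff)
  from est show ?thesis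
    unfolding Qv chi state
    by (elim disjE conjE) (simp_all add: matrix_vector_mult_diff_distrib matrix_vector_right_distrib
        matrix_vector_mult_scaleR P1 algebra_simps)
qed

lemma (in prob_space) square_integrable_vec_noise:
  assumes "square_integrable M r" "square_integrable_vec M w"
    and "(\<forall>\<omega>. s \<omega> = c *\<^sub>R w \<omega> - r \<omega> *\<^sub>R 1) \<or> (\<forall>\<omega>. s \<omega> = c *\<^sub>R (P *v w \<omega>) - r \<omega> *\<^sub>R 1)"
  shows "square_integrable_vec M s"
  using assms(3)
proof (elim disjE)
  assume "\<forall>\<omega>. s \<omega> = c *\<^sub>R w \<omega> - r \<omega> *\<^sub>R 1"
  then have "s = (\<lambda>\<omega>. c *\<^sub>R w \<omega> - r \<omega> *\<^sub>R 1)" by auto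
  then show ?thesis using assms(1,2)
    by (simp add: square_integrable_vec_diff square_integrable_vec_scaleR square_integrable_vec_scaleR_const)
next
  assume "\<forall>\<omega>. s \<omega> = c *\<^sub>R (P *v w \<omega>) - r \<omega> *\<^sub>R 1"
  then have "s = (\<lambda>\<omega>. c *\<^sub>R (P *v w \<omega>) - r \<omega> *\<^sub>R 1)" by auto
  then show ?thesis using assms(1,2)
    by (simp add: square_integrable_vec_diff square_integrable_vec_scaleR square_integrable_vec_mult
        square_integrable_vec_scaleR_const)
qed

theorem theorem2:
  fixes M :: "'w measure"
    and P :: "real^'n^'n" and a \<alpha> s \<delta> \<sigma>r \<sigma>w :: real and T :: nat
    and x :: "nat \<Rightarrow> 'w \<Rightarrow> real" and r :: "nat \<Rightarrow> 'w \<Rightarrow> real"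
    and w :: "nat \<Rightarrow> 'w \<Rightarrow> real^'n" and xe :: "nat \<Rightarrow> 'w \<Rightarrow> real^'n"
    and sn :: "nat \<Rightarrow> 'w \<Rightarrow> real^'n" and \<xi>0 :: "real^'n"
    and S \<Sigma> :: "real^'n^'n"
  defines "Q \<equiv> a *\<^sub>R (P - \<alpha> *\<^sub>R mat 1)"
    and "y \<equiv> (\<lambda>t \<omega>. (\<chi> i. x t \<omega>) + w t \<omega>)"
    and "\<xi> \<equiv> (\<lambda>t \<omega>. xe t \<omega> - x t \<omega> *\<^sub>R (1::real^'n))"
    and "\<rho> \<equiv> spectral_radius (a *\<^sub>R (P - \<alpha> *\<^sub>R mat 1))"
  assumes N2: "CARD('n) \<ge> 2"
    and alpha: "0 < \<alpha>" "\<alpha> \<le> 1"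
    and Psym: "transpose P = P"
    and Pds: "doubly_stochastic P"
    and Peig: "\<forall>c. real_eigenvalue P c \<longrightarrow> -1 < c \<and> c \<le> 1"
    and Peig1: "dim {v. P *v v = v} = 1"
    and rho: "\<rho> < 1"
    and M: "prob_space M"
    and state: "\<forall>t \<omega>. x (Suc t) \<omega> = a * x t \<omega> + r t \<omega>"
    and est: "((\<forall>t \<omega>. xe (Suc t) \<omega> = a *\<^sub>R (P *v xe t \<omega> + \<alpha> *\<^sub>R (y t \<omega> - xe t \<omega>))) \<and>
               (\<forall>t \<omega>. sn t \<omega> = (\<alpha> * a) *\<^sub>R w t \<omega> - r t \<omega> *\<^sub>R (1::real^'n)))
            \<or> ((\<forall>t \<omega>. xe (Suc t) \<omega> = a *\<^sub>R (P *v xe t \<omega> + \<alpha> *\<^sub>R (P *v y t \<omega> - xe t \<omega>))) \<and>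
               (\<forall>t \<omega>. sn t \<omega> = (\<alpha> * a) *\<^sub>R (P *v w t \<omega>) - r t \<omega> *\<^sub>R (1::real^'n)))"
    and init: "\<forall>\<omega>\<in>space M. \<xi> 0 \<omega> = \<xi>0"
    and r_meas: "\<forall>t. r t \<in> borel_measurable M"
    and w_meas: "\<forall>t. w t \<in> borel_measurable M"
    and r_int: "\<forall>t. integrable M (\<lambda>\<omega>. (r t \<omega>)\<^sup>2)"
    and w_int: "\<forall>t i. integrable M (\<lambda>\<omega>. (w t \<omega> $ i)\<^sup>2)"
    and r_mean: "\<forall>t. integral\<^sup>L M (r t) = 0"
    and r_var: "\<forall>t. integral\<^sup>L M (\<lambda>\<omega>. (r t \<omega>)\<^sup>2) = \<sigma>r\<^sup>2"
    and w_mean: "\<forall>t i. integral\<^sup>L M (\<lambda>\<omega>. w t \<omega> $ i) = 0"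
    and w_var: "\<forall>t i. integral\<^sup>L M (\<lambda>\<omega>. (w t \<omega> $ i)\<^sup>2) = \<sigma>w\<^sup>2"
    and w_indep: "\<forall>t. prob_space.indep_vars M (\<lambda>_. borel) (\<lambda>i \<omega>. w t \<omega> $ i) UNIV"
    and rw_uncorr: "\<forall>t i. integral\<^sup>L M (\<lambda>\<omega>. r t \<omega> * w t \<omega> $ i) = 0"
    and s_indep: "prob_space.indep_vars M (\<lambda>_. borel) sn UNIV"
    and s_mean: "\<forall>t i. integral\<^sup>L M (\<lambda>\<omega>. sn t \<omega> $ i) = 0"
    and s_cov: "\<forall>t. second_moment M (sn t) = S"
    and s_pos: "s > 0"
    and s_bound: "AE \<omega> in M. \<forall>t\<le>T. norm (sn t \<omega>) \<le> s"
    and Sigma: "(\<lambda>t. second_moment M (\<xi> t)) \<longlonglongrightarrow> \<Sigma>"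
    and T: "T \<ge> 1"
    and delta: "0 < \<delta>" "\<delta> < 1"
  shows "measure M {\<omega> \<in> space M.
           (1 / real CARD('n)) * mtrace ((1 / real T) *\<^sub>R (\<Sum>t\<in>{1..T}. outer (\<xi> t \<omega>)) - \<Sigma>)
           \<le> 1 / real T * ((norm \<xi>0)\<^sup>2 / (1 - \<rho>\<^sup>2))
            + 1 / real T * (2 * s * norm \<xi>0 / (1 - \<rho>)\<^sup>2)
            + 1 / real T * (s\<^sup>2 / (1 - \<rho>\<^sup>2)\<^sup>2)
            + 1 / sqrt (real T) * (8 * s\<^sup>2 * sqrt (2 * ln (real CARD('n) / \<delta>)) / (1 - \<rho>)\<^sup>2)}
         \<ge> 1 - \<delta>"
proof -
  interpret prob_space M by (rule M)
  have "transpose Q = Q"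
    unfolding Q_def by (simp add: transpose_scalar transpose_diff Psym)
  moreover have "\<rho> = spectral_radius Q" unfolding \<rho>_def Q_def ..
  ultimately have contraction: "matrix_contraction Q \<rho>"
    using symmetric_matrix_norm_le_spectral_radius rho by unfold_locales auto
  have P1: "P *v 1 = 1"
    using Pds by (simp add: doubly_stochastic_def vec_eq_iff matrix_vector_mult_def)
  have step: "\<xi> (Suc t) \<omega> = Q *v \<xi> t \<omega> + sn t \<omega>" for t \<omega>
    unfolding \<xi>_def Q_def using est unfolding y_def
    by (intro estimation_error_step[OF P1 state[rule_format]]) blast
  have response: "\<xi> t \<omega> = matpow Q t *v \<xi>0 + forced_response Q t (\<lambda>k. sn k \<omega>)"
    if "\<omega> \<in> space M" for t \<omega>
    using linear_recurrence_solution[of "\<lambda>t. \<xi> t \<omega>", OF step] init that by simp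
  have "square_integrable_vec M (sn t)" for t
  proof (rule square_integrable_vec_noise)
    show "square_integrable M (r t)" using r_meas r_int by (simp add: square_integrable_def)
    show "square_integrable_vec M (w t)"
      using w_meas w_int
      by (simp add: square_integrable_def square_integrable_vec_def borel_measurable_vec_nth)
    show "(\<forall>\<omega>. sn t \<omega> = (\<alpha> * a) *\<^sub>R w t \<omega> - r t \<omega> *\<^sub>R 1)
        \<or> (\<forall>\<omega>. sn t \<omega> = (\<alpha> * a) *\<^sub>R (P *v w t \<omega>) - r t \<omega> *\<^sub>R 1)"
      using est by blast
  qed
  then have "indep_white_noise M sn S"
    using s_indep s_mean s_cov by (intro indep_white_noise.intro[OF M] indep_white_noise_axioms.intro) auto
  then interpret white_noise_contraction M sn S Q \<rho>
    using contraction by (rule white_noise_contraction.intro)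
  show ?thesis
    using regret_bound[OF response s_bound s_pos T Sigma delta] by simp
qed

end
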